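(* Let $\hat G_0(\omega,\mathbf x,\mathbf y)=\frac{1}{4\pi|\mathbf x-\mathbf y|}e^{i\frac{\omega}{c_o}|\mathbf x-\mathbf y|}$ be the homogeneous Green's function, and suppose the Green's function of the medium with $J$ small inclusions at $\mathbf z_1,\dots,\mathbf z_J$ has the expansion $$\hat G(\omega,\mathbf x,\mathbf y)=\hat G_0(\omega,\mathbf x,\mathbf y)+\sum_{j=1}^J\rho(\omega)\hat G_0(\omega,\mathbf x,\mathbf z_j)\hat G_0(\omega,\mathbf y,\mathbf z_j)+\sum_{j=1}^J\nabla_{\mathbf z}\hat G_0(\omega,\mathbf x,\mathbf z_j)^T\mathbf M(\omega)\nabla_{\mathbf z}\hat G_0(\omega,\mathbf y,\mathbf z_j),$$ with $\rho(\omega)\in\mathbb C$ and $\mathbf M(\omega)$ a symmetric complex $3\times3$ matrix. Suppose the noise support function $K$ completely surrounds the region containing the two points $\mathbf x_r,\mathbf x_{r'}$ and the inclusions $\mathbf z_j$. Then (to first order in $\rho$ and $\mathbf M$) the kernel $\hat Q(\omega,\mathbf x_r,\mathbf x_{r'})=\int_{\mathbb R^3}K(\mathbf y)\overline{\hat G(\omega,\mathbf x_r,\mathbf y)}\hat G(\omega,\mathbf x_{r'},\mathbf y)d\mathbf y$ can be expanded as $$\hat Q(\omega,\mathbf x_r,\mathbf x_{r'})=\frac{c_o}{\omega}{\rm Im}\big(\hat G_0(\omega,\mathbf x_r,\mathbf x_{r'})\big)+\frac{c_o}{\omega}\sum_{j=1}^J{\rm Im}\Big(\rho(\omega)\hat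 G_0(\omega,\mathbf x_r,\mathbf z_j)\hat G_0(\omega,\mathbf x_{r'},\mathbf z_j)\Big)-\frac{c_o}{\omega}\sum_{j=1}^J{\rm Im}(\rho(\omega))\overline{\hat G_0(\omega,\mathbf x_r,\mathbf z_j)}\hat G_0(\omega,\mathbf x_{r'},\mathbf z_j)$$ $$+\frac{c_o}{\omega}\sum_{j=1}^J{\rm Im}\Big(\nabla_{\mathbf z}\hat G_0(\omega,\mathbf x_r,\mathbf z_j)^T\mathbf M(\omega)\nabla_{\mathbf z}\hat G_0(\omega,\mathbf x_{r'},\mathbf z_j)\Big)-\frac{c_o}{\omega}\sum_{j=1}^J\nabla_{\mathbf z}\overline{\hat G_0(\omega,\mathbf x_r,\mathbf z_j)}^T{\rm Im}(\mathbf M(\omega))\nabla_{\mathbf z}\hat G_0(\omega,\mathbf x_{r'},\mathbf z_j).$$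
   Context: $c_o$ is the background wave speed. $K$ is the spatial support function of delta-correlated noise sources (covariance $F(t_2-t_1)K(\mathbf y_1)\delta(\mathbf y_1-\mathbf y_2)$). "Completely surrounds" refers to full-aperture illumination, e.g. $K$ the uniform surface measure on a sphere $\partial B(\mathbf 0,L)$ with $L\to\infty$. ${\rm Im}(\mathbf M)$ is the entrywise imaginary part. *)

theory Defs
  imports "HOL-Analysis.Analysis" "HOL-Library.Landau_Symbols"
begin

definition G0 :: "real \<Rightarrow> real \<Rightarrow> real^3 \<Rightarrow> real^3 \<Rightarrow> complex" where
  "G0 c0 \<omega> x y = exp (\<i> * complex_of_real (\<omega> / c0 * dist x y)) / complex_of_real (4 * pi * dist x y)"

definition grad :: "(real^3 \<Rightarrow> complex) \<Rightarrow> real^3 \<Rightarrow> complex^3" where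
  "grad f z = (\<chi> k. vector_derivative (\<lambda>s::real. f (z + s *\<^sub>R axis k 1)) (at 0))"

definition bil :: "complex^3 \<Rightarrow> complex^3^3 \<Rightarrow> complex^3 \<Rightarrow> complex" where
  "bil u A v = (\<Sum>i\<in>UNIV. \<Sum>j\<in>UNIV. u$i * A$i$j * v$j)"

definition ImM :: "complex^3^3 \<Rightarrow> complex^3^3" where
  "ImM A = (\<chi> i j. complex_of_real (Im (A$i$j)))"

text \<open>Green's function of the medium with J small inclusions at z 0, ..., z (J-1).\<close>
definition Gfull :: "real \<Rightarrow> real \<Rightarrow> nat \<Rightarrow> (nat \<Rightarrow> real^3) \<Rightarrow> complex \<Rightarrow> complex^3^3
                      \<Rightarrow> real^3 \<Rightarrow> real^3 \<Rightarrow> complex" where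
  "Gfull c0 \<omega> J z \<rho> M x y =
     G0 c0 \<omega> x y
     + (\<Sum>j<J. \<rho> * G0 c0 \<omega> x (z j) * G0 c0 \<omega> y (z j))
     + (\<Sum>j<J. bil (grad (G0 c0 \<omega> x) (z j)) M (grad (G0 c0 \<omega> y) (z j)))"

definition sph :: "real \<Rightarrow> real \<Rightarrow> real \<Rightarrow> real^3" where
  "sph L \<theta> \<phi> = vector [L * sin \<theta> * cos \<phi>, L * sin \<theta> * sin \<phi>, L * cos \<theta>]"

text \<open>Integral against the (unnormalised) uniform surface measure of the sphere dB(0,L).\<close>
definition sphere_int :: "real \<Rightarrow> (real^3 \<Rightarrow> complex) \<Rightarrow> complex" where
  "sphere_int L f = integral {0..pi} (\<lambda>\<theta>. integral {0..2*pi}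
       (\<lambda>\<phi>. complex_of_real (L^2 * sin \<theta>) * f (sph L \<theta> \<phi>)))"

text \<open>Kernel Q with K the surface measure on dB(0,L).\<close>
definition QL :: "real \<Rightarrow> real \<Rightarrow> nat \<Rightarrow> (nat \<Rightarrow> real^3) \<Rightarrow> complex \<Rightarrow> complex^3^3
                   \<Rightarrow> real \<Rightarrow> real^3 \<Rightarrow> real^3 \<Rightarrow> complex" where
  "QL c0 \<omega> J z \<rho> M L xr xr' =
     sphere_int L (\<lambda>y. cnj (Gfull c0 \<omega> J z \<rho> M xr y) * Gfull c0 \<omega> J z \<rho> M xr' y)"

definition Qexp :: "real \<Rightarrow> real \<Rightarrow> nat \<Rightarrow> (nat \<Rightarrow> real^3) \<Rightarrow> complex \<Rightarrow> complex^3^3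
                   \<Rightarrow> real^3 \<Rightarrow> real^3 \<Rightarrow> complex" where
  "Qexp c0 \<omega> J z \<rho> M xr xr' =
     complex_of_real (c0/\<omega>) * complex_of_real (Im (G0 c0 \<omega> xr xr'))
   + complex_of_real (c0/\<omega>) * (\<Sum>j<J. complex_of_real
        (Im (\<rho> * G0 c0 \<omega> xr (z j) * G0 c0 \<omega> xr' (z j))))
   - complex_of_real (c0/\<omega>) * (\<Sum>j<J. complex_of_real (Im \<rho>)
        * cnj (G0 c0 \<omega> xr (z j)) * G0 c0 \<omega> xr' (z j))
   + complex_of_real (c0/\<omega>) * (\<Sum>j<J. complex_of_real
        (Im (bil (grad (G0 c0 \<omega> xr) (z j)) M (grad (G0 c0 \<omega> xr') (z j)))))
   - complex_of_real (c0/\<omega>) * (\<Sum>j<J.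
        bil (grad (\<lambda>w. cnj (G0 c0 \<omega> xr w)) (z j)) (ImM M) (grad (G0 c0 \<omega> xr') (z j)))"

text \<open>Scaling of the contrast parameters, used to express "to first order in rho and M".\<close>
definition scaleM :: "real \<Rightarrow> complex^3^3 \<Rightarrow> complex^3^3" where
  "scaleM t M = (\<chi> i j. complex_of_real t * M$i$j)"

end

theory Submission
  imports Defs
begin

text \<open>Each Green's function in the integrand of \<open>QL\<close> behaves at distance \<open>L\<close> like an outgoing
  spherical wave \<open>e\<^sup>i\<^sup>k\<^sup>L / L\<close> times a far-field pattern on the unit sphere, where \<open>k = \<omega> / c0\<close>. The
  spreading factors cancel the area element of the sphere of radius \<open>L\<close>, so \<open>QL\<close> converges to the
  unit-sphere integral of the conjugated product of the patterns. The patterns of \<open>G0(a, -)\<close> and of its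
  gradient in the inclusion position are plane waves \<open>e\<^sup>-\<^sup>i\<^sup>k\<^sup>a\<^sup>\<cdot>\<^sup>y / 4\<pi>\<close> (times \<open>-i k y\<^sub>m\<close>), and the pattern of the full
  Green's function is affine in the contrast scale \<open>t\<close>; hence the limit is a quadratic polynomial in \<open>t\<close>.
  Its constant and linear coefficients are given by the Helmholtz--Kirchhoff identities, which on the
  sphere at infinity reduce to \<open>\<integral>\<^sub>S\<^sub>2 e\<^sup>i\<^sup>c\<^sup>\<cdot>\<^sup>y dy = 4\<pi> sin|c| / |c|\<close> and its derivative in \<open>c\<close>. That
  integral is evaluated after rotating \<open>c\<close> onto the \<open>z\<close>-axis; rotation invariance holds because the
  rotation generators applied to a plane wave are divergences in spherical coordinates.\<close>

definition angle_box :: "(real \<times> real) set" where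
  "angle_box = cbox (0, 0) (pi, 2 * pi)"

lemma inner_vec3: "inner (x :: real^3) y = x$1 * y$1 + x$2 * y$2 + x$3 * y$3"
  unfolding inner_vec_def by (simp add: sum_3)

lemma norm_vec3: "norm (x :: real^3) = sqrt ((x$1)^2 + (x$2)^2 + (x$3)^2)"
  unfolding norm_eq_sqrt_inner inner_vec3 by (simp add: power2_eq_square)

lemma sph_nth:
  "sph L t p $ 1 = L * sin t * cos p" "sph L t p $ 2 = L * sin t * sin p" "sph L t p $ 3 = L * cos t"
  unfolding sph_def by simp_all

lemma sph_eq_scaleR: "sph L t p = L *\<^sub>R sph 1 t p"
  by (simp add: vec_eq_iff forall_3 sph_nth)

lemma norm_sph1: "norm (sph 1 t p) = 1"
proof -
  have "(sin t * cos p)^2 + (sin t * sin p)^2 + (cos t)^2 = (sin t)^2 * ((sin p)^2 + (cos p)^2) + (cos t)^2"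
    by (simp only: power_mult_distrib distrib_left)
  then show ?thesis
    by (simp add: norm_vec3 sph_nth)
qed

lemma norm_sph: "norm (sph L t p) = \<bar>L\<bar>"
  by (subst sph_eq_scaleR) (simp add: norm_sph1)

lemma inner_sph1: "inner c (sph 1 t p) = c$1 * sin t * cos p + c$2 * sin t * sin p + c$3 * cos t"
  by (simp add: inner_vec3 sph_nth)

lemma continuous_on_sph [continuous_intros]:
  fixes f g :: "'a::t2_space \<Rightarrow> real"
  assumes "continuous_on S f" "continuous_on S g"
  shows "continuous_on S (\<lambda>x. sph L (f x) (g x))"
proof -
  have sph_axis: "(\<lambda>x. sph L (f x) (g x)) = (\<lambda>x. (L * sin (f x) * cos (g x)) *\<^sub>R axis 1 1
      + (L * sin (f x) * sin (g x)) *\<^sub>R axis 2 1 + (L * cos (f x)) *\<^sub>R axis 3 1)"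
    by (rule ext) (simp add: vec_eq_iff forall_3 sph_nth axis_def)
  show ?thesis
    unfolding sph_axis using assms by (intro continuous_intros)
qed

lemma continuous_on_comp_sph:
  assumes "continuous_on {y. L0 \<le> norm y} u" "L0 \<le> L"
  shows "continuous_on S (\<lambda>p. u (sph L (fst p) (snd p)))"
proof (rule continuous_on_compose2[OF assms(1)])
  show "(\<lambda>p. sph L (fst p) (snd p)) ` S \<subseteq> {y. L0 \<le> norm y}"
    using assms(2) by (auto simp: norm_sph)
qed (intro continuous_intros)

lemma sphere_int_eq_integral_angle_box:
  assumes "continuous_on angle_box (\<lambda>p. f (sph L (fst p) (snd p)))"
  shows "sphere_int L f
    = integral angle_box (\<lambda>p. complex_of_real (L^2 * sin (fst p)) * f (sph L (fst p) (snd p)))"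
  using assms unfolding sphere_int_def angle_box_def
  by (subst integral_prod_continuous) (auto intro!: continuous_intros simp: cbox_interval)

definition unit_sphere_int :: "(real^3 \<Rightarrow> complex) \<Rightarrow> complex" where
  "unit_sphere_int f = integral angle_box (\<lambda>p. complex_of_real (sin (fst p)) * f (sph 1 (fst p) (snd p)))"

lemma integrable_unit_sphere:
  assumes "continuous_on (sphere 0 1) f"
  shows "(\<lambda>p. complex_of_real (sin (fst p)) * f (sph 1 (fst p) (snd p))) integrable_on angle_box"
  unfolding angle_box_def
  by (intro integrable_continuous continuous_intros continuous_on_compose2[OF assms]) (auto simp: norm_sph1)

lemma unit_sphere_int_add:
  "continuous_on (sphere 0 1) f \<Longrightarrow> continuous_on (sphere 0 1) g \<Longrightarrow>
    unit_sphere_int (\<lambda>y. f y + g y) = unit_sphere_int f + unit_sphere_int g"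
  unfolding unit_sphere_int_def
  using integral_add[OF integrable_unit_sphere integrable_unit_sphere, of f g]
  by (simp add: distrib_left)

lemma unit_sphere_int_diff:
  "continuous_on (sphere 0 1) f \<Longrightarrow> continuous_on (sphere 0 1) g \<Longrightarrow>
    unit_sphere_int (\<lambda>y. f y - g y) = unit_sphere_int f - unit_sphere_int g"
  unfolding unit_sphere_int_def
  using integral_diff[OF integrable_unit_sphere integrable_unit_sphere, of f g]
  by (simp add: right_diff_distrib)

lemma unit_sphere_int_cmult: "unit_sphere_int (\<lambda>y. c * f y) = c * unit_sphere_int f"
  unfolding unit_sphere_int_def by (simp add: mult.left_commute flip: integral_mult_right)

lemma unit_sphere_int_sum:
  "finite A \<Longrightarrow> (\<And>i. i \<in> A \<Longrightarrow> continuous_on (sphere 0 1) (f i)) \<Longrightarrow>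
    unit_sphere_int (\<lambda>y. \<Sum>i\<in>A. f i y) = (\<Sum>i\<in>A. unit_sphere_int (f i))"
proof (induction A rule: finite_induct)
  case empty
  then show ?case unfolding unit_sphere_int_def by simp
next
  case (insert x F)
  then show ?case
    by (simp add: unit_sphere_int_add continuous_on_sum)
qed

lemma unit_sphere_int_cnj:
  assumes "continuous_on (sphere 0 1) f"
  shows "unit_sphere_int (\<lambda>y. cnj (f y)) = cnj (unit_sphere_int f)"
  unfolding unit_sphere_int_def
  using integral_linear[OF integrable_unit_sphere[OF assms] bounded_linear_cnj]
  by (simp add: o_def)

lemma norm_unit_sphere_int_le:
  assumes "continuous_on (sphere 0 1) f" "\<And>y. norm y = 1 \<Longrightarrow> norm (f y) \<le> B"
  shows "norm (unit_sphere_int f) \<le> 2 * pi^2 * B"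
proof -
  have "norm (unit_sphere_int f) \<le> B * measure lborel (cbox (0, 0) (pi, 2 * pi) :: (real \<times> real) set)"
    unfolding unit_sphere_int_def angle_box_def
  proof (rule integrable_bound)
    show "0 \<le> B" using assms(2)[of "axis 1 1"] norm_ge_zero order_trans by (metis norm_axis_1)
    show "(\<lambda>p. complex_of_real (sin (fst p)) * f (sph 1 (fst p) (snd p))) integrable_on cbox (0, 0) (pi, 2 * pi)"
      using integrable_unit_sphere[OF assms(1)] by (simp add: angle_box_def)
    show "norm (complex_of_real (sin (fst p)) * f (sph 1 (fst p) (snd p))) \<le> B" for p
      unfolding norm_mult norm_of_real using assms(2)[OF norm_sph1]
      by (intro order_trans[OF mult_left_le_one_le]) (auto simp: abs_sin_le_one)
  qed
  then show ?thesis by (simp add: content_Pair power2_eq_square ac_simps)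
qed

section \<open>Fields with a far-field pattern\<close>

definition far_field_factor :: "real \<Rightarrow> real \<Rightarrow> complex" where
  "far_field_factor k L = complex_of_real L * exp (- \<i> * complex_of_real (k * L))"

lemma cnj_far_field_factor_mult: "cnj (far_field_factor k L) * far_field_factor k L = complex_of_real (L^2)"
  unfolding far_field_factor_def
  by (simp add: exp_cnj power2_eq_square algebra_simps flip: exp_add)

text \<open>\<open>u(L y) = e\<^sup>i\<^sup>k\<^sup>L / L \<cdot> (U y + O(1/L))\<close> uniformly in the unit vector \<open>y\<close>.\<close>

definition has_far_field :: "real \<Rightarrow> (real^3 \<Rightarrow> complex) \<Rightarrow> (real^3 \<Rightarrow> complex) \<Rightarrow> bool" where
  "has_far_field k u U \<longleftrightarrow> continuous_on UNIV U \<and> (\<exists>R C B. 0 < R \<and> 0 \<le> C \<and> 0 \<le> B \<and>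
     continuous_on {y. R \<le> norm y} u \<and> (\<forall>y. norm y = 1 \<longrightarrow> norm (U y) \<le> B) \<and>
     (\<forall>L y. R \<le> L \<longrightarrow> norm y = 1 \<longrightarrow> norm (far_field_factor k L * u (L *\<^sub>R y) - U y) \<le> C / L))"

lemma has_far_fieldI:
  assumes "continuous_on UNIV U" "0 < R" "0 \<le> C" "0 \<le> B" "continuous_on {y. R \<le> norm y} u"
    "\<And>y. norm y = 1 \<Longrightarrow> norm (U y) \<le> B"
    "\<And>L y. R \<le> L \<Longrightarrow> norm y = 1 \<Longrightarrow> norm (far_field_factor k L * u (L *\<^sub>R y) - U y) \<le> C / L"
  shows "has_far_field k u U"
  unfolding has_far_field_def using assms by blast

lemma has_far_fieldE:
  assumes "has_far_field k u U"
  obtains R C B where "continuous_on UNIV U" "0 < R" "0 \<le> C" "0 \<le> B"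
    "continuous_on {y. R \<le> norm y} u" "\<And>y. norm y = 1 \<Longrightarrow> norm (U y) \<le> B"
    "\<And>L y. R \<le> L \<Longrightarrow> norm y = 1 \<Longrightarrow> norm (far_field_factor k L * u (L *\<^sub>R y) - U y) \<le> C / L"
  using assms unfolding has_far_field_def by blast

lemma has_far_field_zero: "has_far_field k (\<lambda>y. 0) (\<lambda>y. 0)"
  by (rule has_far_fieldI[where R=1 and C=0 and B=0]) auto

lemma has_far_field_add:
  assumes "has_far_field k u U" "has_far_field k v V"
  shows "has_far_field k (\<lambda>y. u y + v y) (\<lambda>y. U y + V y)"
proof -
  obtain L1 C1 B1 where 1: "continuous_on UNIV U" "0 < L1" "0 \<le> C1" "0 \<le> B1"
    "continuous_on {y. L1 \<le> norm y} u" "\<And>y. norm y = 1 \<Longrightarrow> norm (U y) \<le> B1"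
    "\<And>L y. L1 \<le> L \<Longrightarrow> norm y = 1 \<Longrightarrow> norm (far_field_factor k L * u (L *\<^sub>R y) - U y) \<le> C1 / L"
    using has_far_fieldE[OF assms(1)] by blast
  obtain L2 C2 B2 where 2: "continuous_on UNIV V" "0 < L2" "0 \<le> C2" "0 \<le> B2"
    "continuous_on {y. L2 \<le> norm y} v" "\<And>y. norm y = 1 \<Longrightarrow> norm (V y) \<le> B2"
    "\<And>L y. L2 \<le> L \<Longrightarrow> norm y = 1 \<Longrightarrow> norm (far_field_factor k L * v (L *\<^sub>R y) - V y) \<le> C2 / L"
    using has_far_fieldE[OF assms(2)] by blast
  show ?thesis
  proof (rule has_far_fieldI[where R="max L1 L2" and C="C1 + C2" and B="B1 + B2"])
    show "continuous_on {y. max L1 L2 \<le> norm y} (\<lambda>y. u y + v y)"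
      by (intro continuous_intros continuous_on_subset[OF 1(5)] continuous_on_subset[OF 2(5)]) auto
    show "norm (U y + V y) \<le> B1 + B2" if "norm y = 1" for y
      using 1(6)[OF that] 2(6)[OF that] norm_triangle_ineq[of "U y" "V y"] by linarith
    show "norm (far_field_factor k L * (u (L *\<^sub>R y) + v (L *\<^sub>R y)) - (U y + V y)) \<le> (C1 + C2) / L"
      if "max L1 L2 \<le> L" "norm y = 1" for L y
    proof -
      have "far_field_factor k L * (u (L *\<^sub>R y) + v (L *\<^sub>R y)) - (U y + V y)
        = (far_field_factor k L * u (L *\<^sub>R y) - U y) + (far_field_factor k L * v (L *\<^sub>R y) - V y)"
        by (simp add: algebra_simps)
      also have "norm \<dots> \<le> C1 / L + C2 / L"
        using 1(7)[of L y] 2(7)[of L y] that by (smt (verit) norm_triangle_ineq)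
      finally show ?thesis by (simp add: add_divide_distrib)
    qed
  qed (use 1 2 in \<open>auto intro: continuous_intros\<close>)
qed

lemma has_far_field_cmult:
  assumes "has_far_field k u U"
  shows "has_far_field k (\<lambda>y. c * u y) (\<lambda>y. c * U y)"
proof -
  obtain L1 C1 B1 where 1: "continuous_on UNIV U" "0 < L1" "0 \<le> C1" "0 \<le> B1"
    "continuous_on {y. L1 \<le> norm y} u" "\<And>y. norm y = 1 \<Longrightarrow> norm (U y) \<le> B1"
    "\<And>L y. L1 \<le> L \<Longrightarrow> norm y = 1 \<Longrightarrow> norm (far_field_factor k L * u (L *\<^sub>R y) - U y) \<le> C1 / L"
    using has_far_fieldE[OF assms] by blast
  show ?thesis
  proof (rule has_far_fieldI[where R=L1 and C="norm c * C1" and B="norm c * B1"])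
    show "norm (c * U y) \<le> norm c * B1" if "norm y = 1" for y
      using 1(6)[OF that] by (simp add: norm_mult mult_left_mono)
    show "norm (far_field_factor k L * (c * u (L *\<^sub>R y)) - c * U y) \<le> norm c * C1 / L"
      if "L1 \<le> L" "norm y = 1" for L y
    proof -
      have "far_field_factor k L * (c * u (L *\<^sub>R y)) - c * U y
        = c * (far_field_factor k L * u (L *\<^sub>R y) - U y)"
        by (simp add: algebra_simps)
      also have "norm \<dots> \<le> norm c * (C1 / L)"
        unfolding norm_mult using 1(7)[OF that] by (intro mult_left_mono) auto
      finally show ?thesis by simp
    qed
  qed (use 1 in \<open>auto intro!: continuous_intros\<close>)
qed

lemma has_far_field_sum:
  assumes "finite A" "\<And>i. i \<in> A \<Longrightarrow> has_far_field k (u i) (U i)"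
  shows "has_far_field k (\<lambda>y. \<Sum>i\<in>A. u i y) (\<lambda>y. \<Sum>i\<in>A. U i y)"
  using assms by (induction A rule: finite_induct) (simp_all add: has_far_field_zero has_far_field_add)

lemma has_far_field_mult:
  assumes "has_far_field k u U" "continuous_on UNIV F" "0 < Lf" "0 \<le> Cf" "0 \<le> Bf"
    "continuous_on {y. Lf \<le> norm y} f" "\<And>y. norm y = 1 \<Longrightarrow> norm (F y) \<le> Bf"
    "\<And>L y. Lf \<le> L \<Longrightarrow> norm y = 1 \<Longrightarrow> norm (f (L *\<^sub>R y) - F y) \<le> Cf / L"
  shows "has_far_field k (\<lambda>y. f y * u y) (\<lambda>y. F y * U y)"
proof -
  obtain L1 C1 B1 where 1: "continuous_on UNIV U" "0 < L1" "0 \<le> C1" "0 \<le> B1"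
    "continuous_on {y. L1 \<le> norm y} u" "\<And>y. norm y = 1 \<Longrightarrow> norm (U y) \<le> B1"
    "\<And>L y. L1 \<le> L \<Longrightarrow> norm y = 1 \<Longrightarrow> norm (far_field_factor k L * u (L *\<^sub>R y) - U y) \<le> C1 / L"
    using has_far_fieldE[OF assms(1)] by blast
  show ?thesis
  proof (rule has_far_fieldI[where R="max L1 Lf" and C="Cf * (B1 + C1 / L1) + Bf * C1" and B="Bf * B1"])
    show "continuous_on {y. max L1 Lf \<le> norm y} (\<lambda>y. f y * u y)"
      by (intro continuous_intros continuous_on_subset[OF 1(5)] continuous_on_subset[OF assms(6)]) auto
    show "norm (F y * U y) \<le> Bf * B1" if "norm y = 1" for y
      using 1(6)[OF that] assms(7)[OF that] 1(4) assms(5) by (simp add: norm_mult mult_mono)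
    show "norm (far_field_factor k L * (f (L *\<^sub>R y) * u (L *\<^sub>R y)) - F y * U y)
        \<le> (Cf * (B1 + C1 / L1) + Bf * C1) / L"
      if L: "max L1 Lf \<le> L" and y: "norm y = 1" for L y
    proof -
      define a where "a = far_field_factor k L * u (L *\<^sub>R y)"
      have Lpos: "L > 0" using L 1(2) by linarith
      have ea: "norm (a - U y) \<le> C1 / L" unfolding a_def using 1(7)[of L y] L y by simp
      have ef: "norm (f (L *\<^sub>R y) - F y) \<le> Cf / L" using assms(8)[of L y] L y by simp
      have "C1 / L \<le> C1 / L1" using L 1(2,3) by (simp add: divide_left_mono)
      then have na: "norm a \<le> B1 + C1 / L1"
        using ea 1(6)[OF y] norm_triangle_ineq2[of a "U y"] by linarith
      have "far_field_factor k L * (f (L *\<^sub>R y) * u (L *\<^sub>R y)) - F y * U y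
          = (f (L *\<^sub>R y) - F y) * a + F y * (a - U y)"
        unfolding a_def by (simp add: algebra_simps)
      also have "norm \<dots> \<le> norm (f (L *\<^sub>R y) - F y) * norm a + norm (F y) * norm (a - U y)"
        by (metis norm_mult norm_triangle_ineq)
      also have "\<dots> \<le> (Cf / L) * (B1 + C1 / L1) + Bf * (C1 / L)"
        using ef na ea assms(7)[OF y] assms(4,5) Lpos by (intro add_mono mult_mono) auto
      also have "\<dots> = (Cf * (B1 + C1 / L1) + Bf * C1) / L"
        using Lpos by (simp add: field_simps)
      finally show ?thesis .
    qed
  qed (use 1 assms(2-5) in \<open>auto intro: continuous_intros\<close>)
qed

lemma has_far_field_cong:
  assumes "has_far_field k u U" "\<And>y. Lc \<le> norm y \<Longrightarrow> v y = u y"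
  shows "has_far_field k v U"
proof -
  obtain R C B where 1: "continuous_on UNIV U" "0 < R" "0 \<le> C" "0 \<le> B"
    "continuous_on {y. R \<le> norm y} u" "\<And>y. norm y = 1 \<Longrightarrow> norm (U y) \<le> B"
    "\<And>L y. R \<le> L \<Longrightarrow> norm y = 1 \<Longrightarrow> norm (far_field_factor k L * u (L *\<^sub>R y) - U y) \<le> C / L"
    using has_far_fieldE[OF assms(1)] by blast
  show ?thesis
  proof (rule has_far_fieldI[where R="max R Lc" and C=C and B=B])
    show "continuous_on {y. max R Lc \<le> norm y} v"
      by (rule continuous_on_eq[OF continuous_on_subset[OF 1(5)]]) (auto simp: assms(2))
    show "norm (far_field_factor k L * v (L *\<^sub>R y) - U y) \<le> C / L"
      if "max R Lc \<le> L" "norm y = 1" for L y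
      using 1(2) 1(7)[of L y] that assms(2)[of "L *\<^sub>R y"] by simp
  qed (use 1 in auto)
qed

lemma sphere_int_eq_unit_sphere_int:
  assumes "continuous_on {y. R \<le> norm y} f" "R \<le> L"
  shows "sphere_int L f = unit_sphere_int (\<lambda>y. complex_of_real (L^2) * f (L *\<^sub>R y))"
proof -
  have "sphere_int L f
      = integral angle_box (\<lambda>p. complex_of_real (L^2 * sin (fst p)) * f (sph L (fst p) (snd p)))"
    by (rule sphere_int_eq_integral_angle_box[OF continuous_on_comp_sph[OF assms]])
  then show ?thesis
    unfolding unit_sphere_int_def sph_eq_scaleR[of L] by (simp add: ac_simps)
qed

lemma norm_cnj_mult_diff_le: "norm (cnj a * b - cnj A * B) \<le> norm (a - A) * norm b + norm A * norm (b - B)"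
proof -
  have "cnj a * b - cnj A * B = cnj (a - A) * b + cnj A * (b - B)"
    by (simp add: algebra_simps)
  then show ?thesis
    by (metis complex_mod_cnj norm_mult norm_triangle_ineq)
qed

lemma tendsto_sphere_int_cnj_mult:
  assumes "has_far_field k u U" "has_far_field k v V"
  shows "((\<lambda>L. sphere_int L (\<lambda>y. cnj (u y) * v y)) \<longlongrightarrow> unit_sphere_int (\<lambda>y. cnj (U y) * V y)) at_top"
proof -
  obtain L1 C1 B1 where 1: "continuous_on UNIV U" "0 < L1" "0 \<le> C1" "0 \<le> B1"
    "continuous_on {y. L1 \<le> norm y} u" "\<And>y. norm y = 1 \<Longrightarrow> norm (U y) \<le> B1"
    "\<And>L y. L1 \<le> L \<Longrightarrow> norm y = 1 \<Longrightarrow> norm (far_field_factor k L * u (L *\<^sub>R y) - U y) \<le> C1 / L"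
    using has_far_fieldE[OF assms(1)] by blast
  obtain L2 C2 B2 where 2: "continuous_on UNIV V" "0 < L2" "0 \<le> C2" "0 \<le> B2"
    "continuous_on {y. L2 \<le> norm y} v" "\<And>y. norm y = 1 \<Longrightarrow> norm (V y) \<le> B2"
    "\<And>L y. L2 \<le> L \<Longrightarrow> norm y = 1 \<Longrightarrow> norm (far_field_factor k L * v (L *\<^sub>R y) - V y) \<le> C2 / L"
    using has_far_fieldE[OF assms(2)] by blast
  define K where "K = 2 * pi^2 * (C1 * (B2 + C2 / L2) + B1 * C2)"
  have "norm (sphere_int L (\<lambda>y. cnj (u y) * v y) - unit_sphere_int (\<lambda>y. cnj (U y) * V y)) \<le> K / L"
    if L: "max L1 L2 \<le> L" for L
  proof -
    have Lpos: "L > 0" using L 1(2) by linarith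
    define a where "a y = far_field_factor k L * u (L *\<^sub>R y)" for y
    define b where "b y = far_field_factor k L * v (L *\<^sub>R y)" for y
    have far: "(\<lambda>y. L *\<^sub>R y) ` sphere 0 1 \<subseteq> {y. max L1 L2 \<le> norm y}"
      using L Lpos by auto
    have ca: "continuous_on (sphere 0 1) a" "continuous_on (sphere 0 1) b"
      unfolding a_def b_def using far
      by (auto intro!: continuous_intros continuous_on_compose2[OF 1(5)] continuous_on_compose2[OF 2(5)])
    have "sphere_int L (\<lambda>y. cnj (u y) * v y) = unit_sphere_int (\<lambda>y. cnj (a y) * b y)"
    proof -
      have "complex_of_real (L^2) * (cnj (u (L *\<^sub>R y)) * v (L *\<^sub>R y)) = cnj (a y) * b y" for y
        using cnj_far_field_factor_mult[of k L] unfolding a_def b_def by (simp add: algebra_simps)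
      then show ?thesis
        using L by (subst sphere_int_eq_unit_sphere_int[where R="max L1 L2"])
          (auto intro!: continuous_intros continuous_on_subset[OF 1(5)] continuous_on_subset[OF 2(5)])
    qed
    moreover have "unit_sphere_int (\<lambda>y. cnj (a y) * b y - cnj (U y) * V y)
        = unit_sphere_int (\<lambda>y. cnj (a y) * b y) - unit_sphere_int (\<lambda>y. cnj (U y) * V y)"
      using ca 1(1) 2(1) by (intro unit_sphere_int_diff continuous_intros) (auto intro: continuous_on_subset)
    ultimately have "sphere_int L (\<lambda>y. cnj (u y) * v y) - unit_sphere_int (\<lambda>y. cnj (U y) * V y)
        = unit_sphere_int (\<lambda>y. cnj (a y) * b y - cnj (U y) * V y)"
      by simp
    also have "norm \<dots> \<le> 2 * pi^2 * ((C1 / L) * (B2 + C2 / L2) + B1 * (C2 / L))"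
    proof (rule norm_unit_sphere_int_le)
      show "continuous_on (sphere 0 1) (\<lambda>y. cnj (a y) * b y - cnj (U y) * V y)"
        using ca 1(1) 2(1) by (intro continuous_intros) (auto intro: continuous_on_subset)
      fix y :: "real^3" assume y: "norm y = 1"
      have "C2 / L \<le> C2 / L2" using L 2(2,3) by (simp add: divide_left_mono)
      then have "norm (b y) \<le> B2 + C2 / L2"
        using 2(6)[OF y] 2(7)[of L y] L y norm_triangle_ineq2[of "b y" "V y"] unfolding b_def by simp
      then have "norm (a y - U y) * norm (b y) + norm (U y) * norm (b y - V y) \<le> (C1 / L) * (B2 + C2 / L2) + B1 * (C2 / L)"
        using 1(6,7) 2(7) 1(3,4) L y Lpos unfolding a_def b_def by (intro add_mono mult_mono) auto
      then show "norm (cnj (a y) * b y - cnj (U y) * V y) \<le> (C1 / L) * (B2 + C2 / L2) + B1 * (C2 / L)"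
        using norm_cnj_mult_diff_le order_trans by blast
    qed
    also have "\<dots> = K / L" unfolding K_def using Lpos by (simp add: field_simps)
    finally show ?thesis .
  qed
  then have "\<forall>\<^sub>F L in at_top. norm (sphere_int L (\<lambda>y. cnj (u y) * v y) - unit_sphere_int (\<lambda>y. cnj (U y) * V y)) \<le> K / L"
    using eventually_ge_at_top[of "max L1 L2"] by (auto elim: eventually_mono)
  moreover have "((\<lambda>L. K / L) \<longlongrightarrow> 0) at_top"
    by (intro tendsto_divide_0[OF tendsto_const] filterlim_at_top_imp_at_infinity[OF filterlim_ident])
  ultimately show ?thesis
    by (subst LIM_zero_iff[symmetric]) (rule Lim_null_comparison)
qed

section \<open>The far field of the Green's function\<close>

lemma norm_exp_i_diff_le: "norm (exp (\<i> * complex_of_real x) - exp (\<i> * complex_of_real y)) \<le> \<bar>x - y\<bar>"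
proof -
  define t where "t = x - y"
  have "(norm (exp (\<i> * complex_of_real t) - 1))^2 = (cos t - 1)^2 + (sin t)^2"
    by (simp add: cmod_def exp_Euler cos_of_real sin_of_real)
  also have "\<dots> = 4 * (sin (t/2))^2"
    using cos_double_sin[of "t/2"] by (simp add: power2_eq_square algebra_simps)
  also have "\<dots> \<le> t^2"
  proof -
    have "(sin (t/2))^2 \<le> (t/2)^2"
      using abs_sin_x_le_abs_x[of "t/2"] abs_le_square_iff by blast
    then show ?thesis by (simp add: power_divide)
  qed
  finally have "norm (exp (\<i> * complex_of_real t) - 1) \<le> \<bar>t\<bar>"
    by (simp add: abs_le_square_iff[symmetric])
  moreover have "exp (\<i> * complex_of_real x) - exp (\<i> * complex_of_real y)
      = exp (\<i> * complex_of_real y) * (exp (\<i> * complex_of_real t) - 1)"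
    unfolding t_def by (simp add: algebra_simps flip: exp_add)
  ultimately show ?thesis unfolding t_def by (simp add: norm_mult)
qed

lemma dist_far_estimates:
  fixes a y :: "real^3"
  assumes y: "norm y = 1" and L: "2 * norm a + 1 \<le> L"
  defines "d \<equiv> norm (L *\<^sub>R y - a)"
  shows "\<bar>L - d\<bar> \<le> norm a" "L / 2 \<le> d" "\<bar>d - (L - inner a y)\<bar> \<le> (norm a)^2 / L"
proof -
  have Lpos: "L > 0" using L norm_ge_zero[of a] by linarith
  have "norm (L *\<^sub>R y) = L" using y Lpos by simp
  then show 1: "\<bar>L - d\<bar> \<le> norm a"
    unfolding d_def using norm_triangle_ineq3[of "L *\<^sub>R y" a] norm_triangle_ineq4[of "L *\<^sub>R y" a] by linarith
  then show 2: "L / 2 \<le> d" using L by linarith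
  define s where "s = inner a y"
  have s: "\<bar>s\<bar> \<le> norm a" unfolding s_def using Cauchy_Schwarz_ineq2[of a y] y by simp
  have "d^2 = L^2 * inner y y - 2 * L * inner a y + inner a a"
    unfolding d_def power2_norm_eq_inner
    by (simp add: inner_diff_left inner_diff_right inner_commute power2_eq_square algebra_simps)
  then have "d^2 = L^2 - 2 * L * s + (norm a)^2"
    using y unfolding s_def by (simp add: power2_norm_eq_inner[symmetric])
  then have prod: "(d - (L - s)) * (d + (L - s)) = (norm a)^2 - s^2"
    by (simp add: algebra_simps power2_eq_square)
  have sum_ge: "d + (L - s) \<ge> L" using 2 s L by linarith
  have s2: "s^2 \<le> (norm a)^2" using power_mono[OF s abs_ge_zero, of 2] by simp
  have eq: "d - (L - s) = ((norm a)^2 - s^2) / (d + (L - s))"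
    using prod sum_ge Lpos by (simp add: field_simps)
  have "0 \<le> d - (L - s)" unfolding eq using s2 sum_ge Lpos by simp
  moreover have "((norm a)^2 - s^2) / (d + (L - s)) \<le> (norm a)^2 / L"
    using sum_ge Lpos s2 by (intro frac_le) auto
  ultimately have "\<bar>d - (L - s)\<bar> \<le> (norm a)^2 / L" using eq by linarith
  then show "\<bar>d - (L - inner a y)\<bar> \<le> (norm a)^2 / L" by (simp only: s_def)
qed

definition G0_pattern :: "real \<Rightarrow> real^3 \<Rightarrow> real^3 \<Rightarrow> complex" where
  "G0_pattern k a y = exp (- \<i> * complex_of_real (k * inner a y)) / complex_of_real (4 * pi)"

lemma continuous_on_G0_pattern [continuous_intros]: "continuous_on S (G0_pattern k a)"
  unfolding G0_pattern_def by (intro continuous_intros) auto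

lemma far_point_neq:
  fixes a y :: "real^3"
  assumes "2 * norm a + 1 \<le> norm y"
  shows "y \<noteq> a"
proof
  assume "y = a"
  then show False using assms norm_ge_zero[of a] by simp
qed

lemma G0_far_field_estimate:
  fixes a y :: "real^3"
  assumes y: "norm y = 1" and L: "2 * norm a + 1 \<le> L"
  shows "norm (far_field_factor (\<omega> / c0) L * G0 c0 \<omega> a (L *\<^sub>R y) - G0_pattern (\<omega> / c0) a y)
    \<le> (2 * norm a + \<bar>\<omega> / c0\<bar> * (norm a)^2) / (4 * pi) / L"
proof -
  define k where "k = \<omega> / c0"
  define d where "d = norm (L *\<^sub>R y - a)"
  have Lpos: "L > 0" using L norm_ge_zero[of a] by linarith
  note est = dist_far_estimates[OF y L, folded d_def]
  have dpos: "d > 0" using est(2) Lpos by linarith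
  have dist: "dist a (L *\<^sub>R y) = d" unfolding d_def dist_norm by (simp add: norm_minus_commute)
  define E1 where "E1 = exp (\<i> * complex_of_real (k * (d - L)))"
  define E2 where "E2 = exp (\<i> * complex_of_real (- k * inner a y))"
  have "far_field_factor k L * G0 c0 \<omega> a (L *\<^sub>R y) - G0_pattern k a y
      = (complex_of_real (L / d - 1) * E1 + (E1 - E2)) / complex_of_real (4 * pi)"
  proof -
    have "far_field_factor k L * exp (\<i> * complex_of_real (k * d)) = complex_of_real L * E1"
      unfolding far_field_factor_def E1_def by (simp add: algebra_simps flip: exp_add)
    then show ?thesis
      unfolding G0_def G0_pattern_def dist k_def[symmetric] E2_def[symmetric] using dpos
      by (simp add: field_simps) (simp add: algebra_simps E2_def)
  qed
  also have "norm \<dots> \<le> (2 * norm a / L + \<bar>k\<bar> * (norm a)^2 / L) / (4 * pi)"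
  proof -
    have "norm (complex_of_real (L / d - 1) * E1) = \<bar>L - d\<bar> / d"
    proof -
      have "L / d - 1 = (L - d) / d" using dpos by (simp add: field_simps)
      then show ?thesis unfolding E1_def norm_mult norm_of_real norm_exp_i_times using dpos by simp
    qed
    also have "\<dots> \<le> norm a / (L / 2)"
      using est(1,2) dpos Lpos by (intro frac_le) auto
    finally have n1: "norm (complex_of_real (L / d - 1) * E1) \<le> 2 * norm a / L" by (simp add: mult.commute)
    have "norm (E1 - E2) \<le> \<bar>k * (d - L) - (- k * inner a y)\<bar>"
      unfolding E1_def E2_def by (rule norm_exp_i_diff_le)
    also have "\<dots> = \<bar>k\<bar> * \<bar>d - (L - inner a y)\<bar>" by (simp add: abs_mult[symmetric] algebra_simps)
    also have "\<dots> \<le> \<bar>k\<bar> * ((norm a)^2 / L)" using est(3) by (intro mult_left_mono) auto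
    finally have n2: "norm (E1 - E2) \<le> \<bar>k\<bar> * (norm a)^2 / L" by simp
    have "norm (complex_of_real (L / d - 1) * E1 + (E1 - E2)) \<le> 2 * norm a / L + \<bar>k\<bar> * (norm a)^2 / L"
      using n1 n2 norm_triangle_ineq[of "complex_of_real (L / d - 1) * E1" "E1 - E2"] by linarith
    then show ?thesis
      unfolding norm_divide norm_of_real by (simp add: divide_right_mono)
  qed
  also have "\<dots> = (2 * norm a + \<bar>k\<bar> * (norm a)^2) / (4 * pi) / L"
    using Lpos by (simp add: field_simps)
  finally show ?thesis unfolding k_def .
qed

lemma has_far_field_G0: "has_far_field (\<omega> / c0) (G0 c0 \<omega> a) (G0_pattern (\<omega> / c0) a)"
proof (rule has_far_fieldI[where R="2 * norm a + 1" and C="(2 * norm a + \<bar>\<omega> / c0\<bar> * (norm a)^2) / (4 * pi)"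
      and B="1 / (4 * pi)"])
  have "dist a y \<noteq> 0" if "2 * norm a + 1 \<le> norm y" for y
    using far_point_neq[OF that] by simp
  then show "continuous_on {y. 2 * norm a + 1 \<le> norm y} (G0 c0 \<omega> a)"
    unfolding G0_def by (intro continuous_intros) auto
  show "norm (G0_pattern (\<omega> / c0) a y) \<le> 1 / (4 * pi)" for y
    by (simp add: G0_pattern_def norm_divide)
  show "norm (far_field_factor (\<omega> / c0) L * G0 c0 \<omega> a (L *\<^sub>R y) - G0_pattern (\<omega> / c0) a y)
      \<le> (2 * norm a + \<bar>\<omega> / c0\<bar> * (norm a)^2) / (4 * pi) / L"
    if "2 * norm a + 1 \<le> L" "norm y = 1" for L y
    using G0_far_field_estimate[OF that(2,1)] .
qed (auto intro!: continuous_intros add_nonneg_nonneg add_nonneg_pos divide_nonneg_pos)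

definition dG0_radial :: "real \<Rightarrow> real \<Rightarrow> complex" where
  "dG0_radial k r = exp (\<i> * complex_of_real (k * r)) * (\<i> * complex_of_real (k * r) - 1) / complex_of_real (4 * pi * r^2)"

lemma dG0_radial_eq:
  "r \<noteq> 0 \<Longrightarrow> dG0_radial k r
    = exp (\<i> * complex_of_real (k * r)) / complex_of_real (4 * pi * r) * (\<i> * complex_of_real k - 1 / complex_of_real r)"
  unfolding dG0_radial_def by (simp add: field_simps power2_eq_square)

lemma Im_dG0_radial: "Im (dG0_radial k r) = (k * r * cos (k * r) - sin (k * r)) / (4 * pi * r^2)"
  unfolding dG0_radial_def by (simp add: Im_divide_of_real Im_exp Re_exp algebra_simps)

lemma has_field_derivative_outgoing_wave:
  assumes "r > 0"
  shows "((\<lambda>z. exp (\<i> * complex_of_real k * z) / (complex_of_real (4 * pi) * z)) has_field_derivative dG0_radial k r)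
          (at (complex_of_real r))"
proof -
  have r0: "complex_of_real r \<noteq> 0" using assms by simp
  show ?thesis
    apply (rule derivative_eq_intros refl | simp add: r0)+
    unfolding dG0_radial_def of_real_mult of_real_power using assms
    by (simp_all only: mult.assoc) (auto simp: field_simps power2_eq_square)
qed

lemma has_real_derivative_norm_axis:
  fixes v :: "real^3"
  assumes "v \<noteq> 0"
  shows "((\<lambda>s. norm (v + s *\<^sub>R axis m 1)) has_real_derivative (v$m / norm v)) (at 0)"
proof -
  have "((\<lambda>s. v + s *\<^sub>R axis m 1) has_derivative (\<lambda>h. h *\<^sub>R axis m 1)) (at 0)"
    by (auto intro!: derivative_eq_intros)
  moreover have "(norm has_derivative (\<lambda>h. inner h (sgn v))) (at (v + 0 *\<^sub>R axis m 1))"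
    using has_derivative_norm[OF assms] by simp
  ultimately have "((\<lambda>s. norm (v + s *\<^sub>R axis m 1)) has_derivative (\<lambda>h. inner (h *\<^sub>R axis m 1) (sgn v))) (at 0)"
    using has_derivative_compose by (fastforce simp: o_def)
  moreover have "(\<lambda>h. inner (h *\<^sub>R axis m 1) (sgn v)) = (*) (v$m / norm v)"
    by (rule ext) (simp add: inner_commute[of "axis m 1"] inner_axis sgn_div_norm field_simps)
  ultimately show ?thesis unfolding has_field_derivative_def by simp
qed

lemma has_vector_derivative_G0_axis:
  assumes "y \<noteq> a"
  shows "((\<lambda>s. G0 c0 \<omega> y (a + s *\<^sub>R axis m 1)) has_vector_derivative
           dG0_radial (\<omega> / c0) (dist y a) * complex_of_real ((a - y)$m / dist y a)) (at 0)"
proof -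
  define H where "H z = exp (\<i> * complex_of_real (\<omega> / c0) * z) / (complex_of_real (4 * pi) * z)" for z
  define r where "r s = norm ((a - y) + s *\<^sub>R axis m 1)" for s
  have "G0 c0 \<omega> y (a + s *\<^sub>R axis m 1) = H (complex_of_real (r s))" for s
  proof -
    have "dist y (a + s *\<^sub>R axis m 1) = r s"
      unfolding r_def dist_norm by (simp add: norm_minus_commute algebra_simps)
    then show ?thesis unfolding G0_def H_def by (simp add: mult.assoc)
  qed
  then have eq: "(\<lambda>s. G0 c0 \<omega> y (a + s *\<^sub>R axis m 1)) = H \<circ> (\<lambda>s. complex_of_real (r s))"
    by (simp add: o_def)
  have v0: "a - y \<noteq> 0" and nv: "norm (a - y) = dist y a"
    using assms by (auto simp: dist_norm norm_minus_commute)
  have "((\<lambda>s. complex_of_real (r s)) has_vector_derivative complex_of_real ((a - y)$m / dist y a)) (at 0)"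
    unfolding r_def nv[symmetric] by (intro has_vector_derivative_of_real has_real_derivative_norm_axis v0)
  moreover have "r 0 = dist y a" using nv by (simp add: r_def)
  then have "(H has_field_derivative dG0_radial (\<omega> / c0) (dist y a)) (at (complex_of_real (r 0)))"
    unfolding H_def by (metis has_field_derivative_outgoing_wave assms zero_less_dist_iff)
  ultimately show ?thesis
    unfolding eq by (subst mult.commute) (rule field_vector_diff_chain_at)
qed

lemma grad_G0_nth:
  "y \<noteq> a \<Longrightarrow> grad (G0 c0 \<omega> y) a $ m = dG0_radial (\<omega> / c0) (dist y a) * complex_of_real ((a - y)$m / dist y a)"
  unfolding grad_def using vector_derivative_at[OF has_vector_derivative_G0_axis] by simp

lemma grad_cnj_G0:
  assumes "y \<noteq> a"
  shows "grad (\<lambda>w. cnj (G0 c0 \<omega> y w)) a = (\<chi> m. cnj (grad (G0 c0 \<omega> y) a $ m))"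
  unfolding vec_eq_iff
proof
  fix m
  have "vector_derivative (\<lambda>s. cnj (G0 c0 \<omega> y (a + s *\<^sub>R axis m 1))) (at 0) = cnj (grad (G0 c0 \<omega> y) a $ m)"
    unfolding grad_G0_nth[OF assms]
    by (rule vector_derivative_at[OF has_vector_derivative_cnj[OF has_vector_derivative_G0_axis[OF assms]]])
  then show "grad (\<lambda>w. cnj (G0 c0 \<omega> y w)) a $ m = (\<chi> m. cnj (grad (G0 c0 \<omega> y) a $ m)) $ m"
    unfolding grad_def by simp
qed

definition grad_G0_pattern :: "real \<Rightarrow> real^3 \<Rightarrow> 3 \<Rightarrow> real^3 \<Rightarrow> complex" where
  "grad_G0_pattern k a m y = (- \<i> * complex_of_real k * complex_of_real (y$m)) * G0_pattern k a y"

lemma continuous_on_grad_G0_pattern [continuous_intros]: "continuous_on S (grad_G0_pattern k a m)"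
  unfolding grad_G0_pattern_def by (intro continuous_intros)

lemma grad_G0_factor_far_estimate:
  fixes a y :: "real^3"
  assumes y: "norm y = 1" and L: "2 * norm a + 1 \<le> L"
  defines "d \<equiv> dist (L *\<^sub>R y) a"
  shows "norm ((\<i> * complex_of_real k - 1 / complex_of_real d) * complex_of_real ((a - L *\<^sub>R y)$m / d)
           - - \<i> * complex_of_real k * complex_of_real (y$m)) \<le> (4 * \<bar>k\<bar> * norm a + 2) / L"
proof -
  have Lpos: "L > 0" using L norm_ge_zero[of a] by linarith
  note est = dist_far_estimates[OF y L, folded dist_norm, folded d_def]
  have dpos: "d > 0" using est(2) Lpos by linarith
  define q where "q = (a - L *\<^sub>R y)$m / d"
  have ym: "\<bar>y$m\<bar> \<le> 1" using component_le_norm_cart[of y m] y by simp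
  have q1: "\<bar>q\<bar> \<le> 1"
  proof -
    have "\<bar>(a - L *\<^sub>R y)$m\<bar> \<le> d"
      unfolding d_def dist_norm using component_le_norm_cart[of "a - L *\<^sub>R y" m]
      by (simp add: norm_minus_commute)
    then show ?thesis unfolding q_def using dpos by (simp add: abs_div)
  qed
  have q2: "\<bar>q + y$m\<bar> \<le> 4 * norm a / L"
  proof -
    have "\<bar>(d - L) * y$m\<bar> \<le> norm a"
      using est(1) ym by (simp add: abs_mult) (metis abs_minus_commute mult_left_le abs_ge_zero order_trans)
    then have "\<bar>a$m + (d - L) * y$m\<bar> \<le> 2 * norm a"
      using component_le_norm_cart[of a m] by linarith
    moreover have "q + y$m = (a$m + (d - L) * y$m) / d" unfolding q_def using dpos by (simp add: field_simps)
    ultimately have "\<bar>q + y$m\<bar> \<le> 2 * norm a / d" using dpos by (simp add: abs_div divide_right_mono)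
    also have "\<dots> \<le> 2 * norm a / (L / 2)" using est(2) Lpos by (intro divide_left_mono) auto
    finally show ?thesis by simp
  qed
  have "norm (complex_of_real (q / d)) \<le> 2 / L"
  proof -
    have "\<bar>q / d\<bar> \<le> 1 / d" using q1 dpos by (simp add: abs_div divide_right_mono)
    also have "\<dots> \<le> 1 / (L / 2)" using est(2) Lpos by (intro divide_left_mono) auto
    finally show ?thesis unfolding norm_of_real by simp
  qed
  moreover have "norm (\<i> * complex_of_real k * complex_of_real (q + y$m)) \<le> \<bar>k\<bar> * (4 * norm a / L)"
    unfolding norm_mult norm_of_real using q2 by (simp add: mult_left_mono del: times_divide_eq_right)
  moreover have "(\<i> * complex_of_real k - 1 / complex_of_real d) * complex_of_real q - - \<i> * complex_of_real k * complex_of_real (y$m)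
      = \<i> * complex_of_real k * complex_of_real (q + y$m) - complex_of_real (q / d)"
    by (simp add: field_simps)
  ultimately have "norm ((\<i> * complex_of_real k - 1 / complex_of_real d) * complex_of_real q
      - - \<i> * complex_of_real k * complex_of_real (y$m)) \<le> \<bar>k\<bar> * (4 * norm a / L) + 2 / L"
    by (metis (no_types, lifting) add_mono norm_triangle_ineq4 order_trans)
  also have "\<dots> = (4 * \<bar>k\<bar> * norm a + 2) / L" using Lpos by (simp add: field_simps)
  finally show ?thesis unfolding q_def .
qed

text \<open>Away from \<open>a\<close>, \<open>\<nabla>\<^sub>z G0(y, z)|\<^sub>z\<^sub>=\<^sub>a\<close> is \<open>G0(a, y)\<close> times a factor tending to \<open>-i k y/|y|\<close>.\<close>

lemma has_far_field_grad_G0: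
  "has_far_field (\<omega> / c0) (\<lambda>y. grad (G0 c0 \<omega> y) a $ m) (grad_G0_pattern (\<omega> / c0) a m)"
proof -
  define k where "k = \<omega> / c0"
  define f where "f y = (\<i> * complex_of_real k - 1 / complex_of_real (dist y a)) * complex_of_real ((a - y)$m / dist y a)" for y
  define R where "R = 2 * norm a + 1"
  have far: "dist y a \<noteq> 0" if "R \<le> norm y" for y
    using far_point_neq[of a y] that unfolding R_def by simp
  have "has_far_field k (\<lambda>y. f y * G0 c0 \<omega> a y) (grad_G0_pattern k a m)"
    unfolding grad_G0_pattern_def
  proof (rule has_far_field_mult[where Lf=R and Cf="4 * \<bar>k\<bar> * norm a + 2" and Bf="\<bar>k\<bar>"])
    show "has_far_field k (G0 c0 \<omega> a) (G0_pattern k a)"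
      unfolding k_def by (rule has_far_field_G0)
    show "continuous_on {y. R \<le> norm y} f"
      unfolding f_def using far by (intro continuous_intros) auto
    show "norm (- \<i> * complex_of_real k * complex_of_real (y $ m)) \<le> \<bar>k\<bar>" if "norm y = 1" for y
      using component_le_norm_cart[of y m] that by (simp add: norm_mult mult_left_le)
    show "norm (f (L *\<^sub>R y) - - \<i> * complex_of_real k * complex_of_real (y $ m)) \<le> (4 * \<bar>k\<bar> * norm a + 2) / L"
      if "R \<le> L" "norm y = 1" for L y
      unfolding f_def using grad_G0_factor_far_estimate[of y a L k m] that unfolding R_def by simp
  qed (auto simp: R_def intro!: continuous_intros add_nonneg_pos)
  then show ?thesis
    unfolding k_def
  proof (rule has_far_field_cong[where Lc=R])
    fix y :: "real^3" assume y: "R \<le> norm y"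
    have "y \<noteq> a" using far[OF y] by auto
    then show "grad (G0 c0 \<omega> y) a $ m = f y * G0 c0 \<omega> a y"
      unfolding grad_G0_nth[OF \<open>y \<noteq> a\<close>] f_def G0_def dist_commute[of a y] k_def[symmetric]
        dG0_radial_eq[OF far[OF y]]
      by (simp add: field_simps)
  qed
qed

section \<open>Plane waves on the unit sphere\<close>

lemma integral_rectangle_divergence_eq_0:
  fixes Ha Hb ha hb :: "real \<Rightarrow> real \<Rightarrow> complex"
  assumes "\<And>t p. ((\<lambda>t. Ha t p) has_vector_derivative ha t p) (at t)"
      and "\<And>t p. ((\<lambda>p. Hb t p) has_vector_derivative hb t p) (at p)"
      and "continuous_on (cbox (a, c) (b, d)) (\<lambda>q. ha (fst q) (snd q))"
      and "continuous_on (cbox (a, c) (b, d)) (\<lambda>q. hb (fst q) (snd q))"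
      and "a \<le> b" "c \<le> d" "\<And>p. Ha b p = Ha a p" "\<And>t. Hb t d = Hb t c"
  shows "integral (cbox (a, c) (b, d)) (\<lambda>q. ha (fst q) (snd q) + hb (fst q) (snd q)) = 0"
proof -
  have "integral (cbox (a, c) (b, d)) (\<lambda>q. ha (fst q) (snd q))
      = integral (cbox a b) (\<lambda>t. integral (cbox c d) (\<lambda>p. ha t p))"
    using assms(3) by (simp add: integral_prod_continuous)
  also have "\<dots> = integral (cbox c d) (\<lambda>p. integral (cbox a b) (\<lambda>t. ha t p))"
    using assms(3) by (intro integral_swap_continuous) (simp add: case_prod_beta)
  also have "\<dots> = 0"
  proof -
    have "((\<lambda>t. ha t p) has_integral (Ha b p - Ha a p)) {a..b}" for p
      using assms(1,5) by (intro fundamental_theorem_of_calculus) (auto intro: has_vector_derivative_at_within)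
    then have "integral {a..b} (\<lambda>t. ha t p) = 0" for p using assms(7) by (simp add: integral_unique)
    then show ?thesis by (simp add: cbox_interval)
  qed
  finally have za: "integral (cbox (a, c) (b, d)) (\<lambda>q. ha (fst q) (snd q)) = 0" .
  have "integral (cbox (a, c) (b, d)) (\<lambda>q. hb (fst q) (snd q))
      = integral (cbox a b) (\<lambda>t. integral (cbox c d) (\<lambda>p. hb t p))"
    using assms(4) by (simp add: integral_prod_continuous)
  also have "\<dots> = 0"
  proof -
    have "((\<lambda>p. hb t p) has_integral (Hb t d - Hb t c)) {c..d}" for t
      using assms(2,6) by (intro fundamental_theorem_of_calculus) (auto intro: has_vector_derivative_at_within)
    then have "integral {c..d} (\<lambda>p. hb t p) = 0" for t using assms(8) by (simp add: integral_unique)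
    then show ?thesis by (simp add: cbox_interval)
  qed
  finally show ?thesis
    using za integral_add[OF integrable_continuous[OF assms(3)] integrable_continuous[OF assms(4)]] by simp
qed

lemma has_vector_derivative_exp_i:
  assumes "(e has_real_derivative e') (at x)"
  shows "((\<lambda>x. exp (\<i> * complex_of_real (e x))) has_vector_derivative
           (\<i> * complex_of_real e' * exp (\<i> * complex_of_real (e x)))) (at x)"
proof -
  have "((\<lambda>z. exp (\<i> * z)) has_field_derivative (\<i> * exp (\<i> * complex_of_real (e x)))) (at (complex_of_real (e x)))"
    by (auto intro!: derivative_eq_intros)
  from field_vector_diff_chain_at[OF has_vector_derivative_of_real[OF assms] this] show ?thesis
    by (simp add: o_def mult.assoc mult.left_commute)
qed

lemma has_vector_derivative_of_real_mult:
  assumes "(r has_real_derivative r') (at x)" "(g has_vector_derivative g') (at x)"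
  shows "((\<lambda>x. complex_of_real (r x) * g x) has_vector_derivative
           (complex_of_real (r x) * g' + complex_of_real r' * g x)) (at x)"
  using has_vector_derivative_mult[OF has_vector_derivative_of_real[OF assms(1)] assms(2)] by simp

definition plane_wave_int :: "real^3 \<Rightarrow> complex" where
  "plane_wave_int c = unit_sphere_int (\<lambda>y. exp (\<i> * complex_of_real (inner c y)))"

lemma has_vector_derivative_plane_wave_int:
  assumes deriv: "\<And>a. (f has_vector_derivative f' a) (at a)" and cont: "continuous_on UNIV f'"
  shows "((\<lambda>a. plane_wave_int (f a)) has_vector_derivative
    unit_sphere_int (\<lambda>y. \<i> * complex_of_real (inner (f' a0) y) * exp (\<i> * complex_of_real (inner (f a0) y)))) (at a0)"
proof -
  define g where "g a q = complex_of_real (sin (fst q)) * exp (\<i> * complex_of_real (inner (f a) (sph 1 (fst q) (snd q))))" for a q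
  define g' where "g' a q = complex_of_real (sin (fst q)) * (\<i> * complex_of_real (inner (f' a) (sph 1 (fst q) (snd q)))
      * exp (\<i> * complex_of_real (inner (f a) (sph 1 (fst q) (snd q)))))" for a q
  have cf: "continuous_on UNIV f"
    using deriv has_vector_derivative_continuous continuous_at_imp_continuous_on by blast
  have "((\<lambda>a. integral (cbox (0, 0) (pi, 2 * pi)) (g a)) has_vector_derivative
      integral (cbox (0, 0) (pi, 2 * pi)) (g' a0)) (at a0 within UNIV)"
  proof (rule leibniz_rule_vector_derivative)
    fix a :: real and q :: "real \<times> real"
    have "((\<lambda>a. inner (f a) (sph 1 (fst q) (snd q))) has_real_derivative inner (f' a) (sph 1 (fst q) (snd q))) (at a)"
      using has_derivative_inner_left[OF deriv[of a, unfolded has_vector_derivative_def]]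
      unfolding has_real_derivative_iff_has_vector_derivative has_vector_derivative_def by simp
    then show "((\<lambda>a. g a q) has_vector_derivative g' a q) (at a within UNIV)"
      unfolding g_def g'_def by (intro has_vector_derivative_mult_right has_vector_derivative_exp_i)
  next
    show "continuous_on (UNIV \<times> cbox (0, 0) (pi, 2 * pi)) (\<lambda>(a, q). g' a q)"
      unfolding g'_def case_prod_beta
      by (intro continuous_intros continuous_on_compose2[OF cont] continuous_on_compose2[OF cf]) auto
  qed (auto simp: g_def intro!: integrable_continuous continuous_intros continuous_on_compose2[OF cf])
  then show ?thesis
    unfolding plane_wave_int_def unit_sphere_int_def angle_box_def g_def g'_def by (simp add: mult.assoc)
qed

lemma plane_wave_int_constant:
  assumes "\<And>a. (f has_vector_derivative f' a) (at a)" "continuous_on UNIV f'"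
    and "\<And>a. unit_sphere_int (\<lambda>y. \<i> * complex_of_real (inner (f' a) y) * exp (\<i> * complex_of_real (inner (f a) y))) = 0"
  shows "plane_wave_int (f a) = plane_wave_int (f 0)"
proof -
  have "\<exists>C. \<forall>a\<in>UNIV. plane_wave_int (f a) = C"
    using has_vector_derivative_plane_wave_int[OF assms(1,2)] assms(3)
    by (intro has_derivative_zero_constant) (auto simp: has_vector_derivative_def)
  then show ?thesis by auto
qed

text \<open>In spherical coordinates these integrands are divergences in \<open>(\<theta>, \<phi>)\<close> whose fluxes vanish at
  the poles and cancel across \<open>\<phi> = 0, 2\<pi>\<close>.\<close>

lemma unit_sphere_int_rotation_generator_y:
  "unit_sphere_int (\<lambda>y. \<i> * complex_of_real (c$1 * y$3 - c$3 * y$1) * exp (\<i> * complex_of_real (inner c y))) = 0"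
proof -
  define e where "e t p = c$1 * sin t * cos p + c$2 * sin t * sin p + c$3 * cos t" for t p
  define et where "et t p = c$1 * cos t * cos p + c$2 * cos t * sin p - c$3 * sin t" for t p
  define ep where "ep t p = - c$1 * sin t * sin p + c$2 * sin t * cos p" for t p
  define E where "E t p = exp (\<i> * complex_of_real (e t p))" for t p
  define H1 where "H1 t p = complex_of_real (sin t * cos p) * E t p" for t p
  define h1 where "h1 t p = complex_of_real (sin t * cos p) * (\<i> * complex_of_real (et t p) * E t p)
     + complex_of_real (cos t * cos p) * E t p" for t p
  define H2 where "H2 t p = complex_of_real (- cos t * sin p) * E t p" for t p
  define h2 where "h2 t p = complex_of_real (- cos t * sin p) * (\<i> * complex_of_real (ep t p) * E t p)
     + complex_of_real (- cos t * cos p) * E t p" for t p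
  have "integral angle_box (\<lambda>q. h1 (fst q) (snd q) + h2 (fst q) (snd q)) = 0"
    unfolding angle_box_def
  proof (rule integral_rectangle_divergence_eq_0[where Ha=H1 and Hb=H2])
    fix t p
    have "((\<lambda>t. e t p) has_real_derivative et t p) (at t)"
      unfolding e_def et_def by (auto intro!: derivative_eq_intros simp: algebra_simps)
    then show "((\<lambda>t. H1 t p) has_vector_derivative h1 t p) (at t)"
      unfolding H1_def h1_def E_def
      by (intro has_vector_derivative_of_real_mult has_vector_derivative_exp_i) (auto intro!: derivative_eq_intros)
    have "((\<lambda>p. e t p) has_real_derivative ep t p) (at p)"
      unfolding e_def ep_def by (auto intro!: derivative_eq_intros simp: algebra_simps)
    then show "((\<lambda>p. H2 t p) has_vector_derivative h2 t p) (at p)"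
      unfolding H2_def h2_def E_def
      by (intro has_vector_derivative_of_real_mult has_vector_derivative_exp_i) (auto intro!: derivative_eq_intros)
  qed (auto simp: H1_def H2_def h1_def h2_def E_def e_def et_def ep_def intro!: continuous_intros)
  moreover have "complex_of_real (sin t) * (\<i> * complex_of_real (c$1 * cos t - c$3 * (sin t * cos p)) * E t p)
      = h1 t p + h2 t p" for t p
  proof -
    have "h1 t p + h2 t p = \<i> * E t p * complex_of_real (sin t * cos p * et t p - cos t * sin p * ep t p)"
      unfolding h1_def h2_def by (simp add: algebra_simps)
    also have "sin t * cos p * et t p - cos t * sin p * ep t p = sin t * (c$1 * cos t - c$3 * (sin t * cos p))"
      unfolding et_def ep_def using sin_cos_squared_add[of p] by algebra
    finally show ?thesis by (simp add: algebra_simps)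
  qed
  ultimately show ?thesis
    unfolding unit_sphere_int_def inner_sph1 by (simp add: sph_nth E_def e_def)
qed

lemma unit_sphere_int_rotation_generator_z:
  "unit_sphere_int (\<lambda>y. \<i> * complex_of_real (c$1 * y$2 - c$2 * y$1) * exp (\<i> * complex_of_real (inner c y))) = 0"
proof -
  define e where "e t p = c$1 * sin t * cos p + c$2 * sin t * sin p + c$3 * cos t" for t p
  define ep where "ep t p = - c$1 * sin t * sin p + c$2 * sin t * cos p" for t p
  define E where "E t p = exp (\<i> * complex_of_real (e t p))" for t p
  define H2 where "H2 t p = complex_of_real (- sin t) * E t p" for t p
  define h2 where "h2 t p = complex_of_real (- sin t) * (\<i> * complex_of_real (ep t p) * E t p)
     + complex_of_real 0 * E t p" for t p
  have "integral angle_box (\<lambda>q. 0 + h2 (fst q) (snd q)) = 0"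
    unfolding angle_box_def
  proof (rule integral_rectangle_divergence_eq_0[where Ha="\<lambda>t p. 0" and Hb=H2])
    fix t p
    have "((\<lambda>p. e t p) has_real_derivative ep t p) (at p)"
      unfolding e_def ep_def by (auto intro!: derivative_eq_intros simp: algebra_simps)
    then show "((\<lambda>p. H2 t p) has_vector_derivative h2 t p) (at p)"
      unfolding H2_def h2_def E_def
      by (intro has_vector_derivative_of_real_mult has_vector_derivative_exp_i) (auto intro!: derivative_eq_intros)
  qed (auto simp: H2_def h2_def E_def e_def ep_def intro!: continuous_intros)
  moreover have "complex_of_real (sin t) * (\<i> * complex_of_real (c$1 * (sin t * sin p) - c$2 * (sin t * cos p)) * E t p)
      = h2 t p" for t p
    unfolding h2_def ep_def by (simp add: algebra_simps)
  ultimately show ?thesis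
    unfolding unit_sphere_int_def inner_sph1 by (simp add: sph_nth E_def e_def)
qed

lemma vector3_eq_axis_sum: "(vector [x, y, z] :: real^3) = x *\<^sub>R axis 1 1 + y *\<^sub>R axis 2 1 + z *\<^sub>R axis 3 1"
  by (simp add: vec_eq_iff forall_3 axis_def)

lemma has_vector_derivative_vector3:
  assumes "(f1 has_real_derivative d1) (at a)" "(f2 has_real_derivative d2) (at a)"
    "(f3 has_real_derivative d3) (at a)"
  shows "((\<lambda>a. vector [f1 a, f2 a, f3 a] :: real^3) has_vector_derivative vector [d1, d2, d3]) (at a)"
  unfolding vector3_eq_axis_sum using assms by (auto intro!: derivative_eq_intros)

lemma plane_wave_int_rot_y:
  "plane_wave_int (vector [c1 * cos a - c3 * sin a, c2, c1 * sin a + c3 * cos a]) = plane_wave_int (vector [c1, c2, c3])"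
proof -
  define f where "f a = (vector [c1 * cos a - c3 * sin a, c2, c1 * sin a + c3 * cos a] :: real^3)" for a
  define f' where "f' a = (vector [- c1 * sin a - c3 * cos a, 0, c1 * cos a - c3 * sin a] :: real^3)" for a
  have "plane_wave_int (f a) = plane_wave_int (f 0)"
  proof (rule plane_wave_int_constant)
    show "(f has_vector_derivative f' a) (at a)" for a
      unfolding f_def f'_def by (intro has_vector_derivative_vector3) (auto intro!: derivative_eq_intros)
    show "continuous_on UNIV f'"
      unfolding f'_def vector3_eq_axis_sum by (intro continuous_intros)
    have "inner (f' a) y = (f a)$1 * y$3 - (f a)$3 * y$1" for a y
      unfolding f_def f'_def inner_vec3 by (simp add: algebra_simps)
    then show "unit_sphere_int (\<lambda>y. \<i> * complex_of_real (inner (f' a) y) * exp (\<i> * complex_of_real (inner (f a) y))) = 0" for a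
      using unit_sphere_int_rotation_generator_y[of "f a"] by simp
  qed
  then show ?thesis unfolding f_def by simp
qed

lemma plane_wave_int_rot_z:
  "plane_wave_int (vector [c1 * cos a - c2 * sin a, c1 * sin a + c2 * cos a, c3]) = plane_wave_int (vector [c1, c2, c3])"
proof -
  define f where "f a = (vector [c1 * cos a - c2 * sin a, c1 * sin a + c2 * cos a, c3] :: real^3)" for a
  define f' where "f' a = (vector [- c1 * sin a - c2 * cos a, c1 * cos a - c2 * sin a, 0] :: real^3)" for a
  have "plane_wave_int (f a) = plane_wave_int (f 0)"
  proof (rule plane_wave_int_constant)
    show "(f has_vector_derivative f' a) (at a)" for a
      unfolding f_def f'_def by (intro has_vector_derivative_vector3) (auto intro!: derivative_eq_intros)
    show "continuous_on UNIV f'"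
      unfolding f'_def vector3_eq_axis_sum by (intro continuous_intros)
    have "inner (f' a) y = (f a)$1 * y$2 - (f a)$2 * y$1" for a y
      unfolding f_def f'_def inner_vec3 by (simp add: algebra_simps)
    then show "unit_sphere_int (\<lambda>y. \<i> * complex_of_real (inner (f' a) y) * exp (\<i> * complex_of_real (inner (f a) y))) = 0" for a
      using unit_sphere_int_rotation_generator_z[of "f a"] by simp
  qed
  then show ?thesis unfolding f_def by simp
qed

lemma rotation_to_first_axis:
  obtains a where "x * cos a - y * sin a = sqrt (x^2 + y^2)" "x * sin a + y * cos a = 0"
proof (cases "sqrt (x^2 + y^2) = 0")
  case True
  then have "x = 0" "y = 0" by (auto simp: sum_power2_eq_zero_iff)
  then show ?thesis using that[of 0] by simp
next
  case False
  define r where "r = sqrt (x^2 + y^2)"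
  have "r \<ge> 0" unfolding r_def by simp
  then have r: "r > 0" "r^2 = x^2 + y^2" using False unfolding r_def by (linarith, simp)
  have "(x / r)^2 + (- y / r)^2 = (x^2 + y^2) / r^2" by (simp add: power_divide add_divide_distrib)
  also have "\<dots> = 1" unfolding r(2)[symmetric] using r(1) by simp
  finally have "(x / r)^2 + (- y / r)^2 = 1" .
  then obtain a where a: "x / r = cos a" "- y / r = sin a" using sincos_total_2pi by metis
  show ?thesis
  proof (rule that[of a])
    show "x * cos a - y * sin a = sqrt (x^2 + y^2)"
      unfolding a[symmetric] r_def[symmetric] using r by (simp add: field_simps power2_eq_square)
    show "x * sin a + y * cos a = 0"
      unfolding a[symmetric] using r by (simp add: field_simps)
  qed
qed

lemma plane_wave_int_eq_z_axis: "plane_wave_int c = plane_wave_int (vector [0, 0, norm c])"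
proof -
  define \<rho> where "\<rho> = sqrt ((c$1)^2 + (c$2)^2)"
  obtain a where a: "c$1 * cos a - c$2 * sin a = \<rho>" "c$1 * sin a + c$2 * cos a = 0"
    unfolding \<rho>_def by (rule rotation_to_first_axis)
  obtain b where b: "c$3 * cos b - (- \<rho>) * sin b = sqrt ((c$3)^2 + (- \<rho>)^2)"
      "c$3 * sin b + (- \<rho>) * cos b = 0"
    by (rule rotation_to_first_axis)
  have n: "sqrt ((c$3)^2 + (- \<rho>)^2) = norm c"
    unfolding norm_vec3 \<rho>_def by (simp add: algebra_simps)
  have c: "vector [c$1, c$2, c$3] = c" by (simp add: vec_eq_iff forall_3)
  have "plane_wave_int c = plane_wave_int (vector [c$1, c$2, c$3])" unfolding c ..
  also have "\<dots> = plane_wave_int (vector [\<rho>, 0, c$3])"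
    using plane_wave_int_rot_z[of "c$1" a "c$2" "c$3", unfolded a] by (rule sym)
  also have "\<dots> = plane_wave_int (vector [0, 0, norm c])"
  proof -
    have "\<rho> * cos b - c$3 * sin b = 0" "\<rho> * sin b + c$3 * cos b = norm c"
      using b n by linarith+
    from plane_wave_int_rot_y[of \<rho> b "c$3" 0, unfolded this] show ?thesis by (rule sym)
  qed
  finally show ?thesis .
qed

lemma plane_wave_int_z_axis:
  assumes r: "r \<noteq> 0"
  shows "plane_wave_int (vector [0, 0, r]) = complex_of_real (4 * pi * sin r / r)"
proof -
  define g where "g t = complex_of_real (sin t) * exp (\<i> * complex_of_real (r * cos t))" for t
  have "plane_wave_int (vector [0, 0, r]) = integral (cbox (0, 0) (pi, 2 * pi)) (\<lambda>q. g (fst q))"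
    unfolding plane_wave_int_def unit_sphere_int_def angle_box_def g_def inner_sph1 by simp
  also have "\<dots> = integral (cbox 0 pi) (\<lambda>t. integral (cbox 0 (2 * pi)) (\<lambda>p. g t))"
  proof -
    have "continuous_on UNIV g" unfolding g_def by (intro continuous_intros)
    then show ?thesis
      by (subst integral_prod_continuous) (auto intro!: continuous_on_compose2[of UNIV g] continuous_intros)
  qed
  also have "\<dots> = integral {0..pi} (\<lambda>t. complex_of_real (2 * pi) * g t)"
    by (simp add: cbox_interval scaleR_conv_of_real)
  also have "\<dots> = complex_of_real (2 * pi) * integral {0..pi} g"
    by (rule integral_mult_right)
  also have "integral {0..pi} g = complex_of_real (2 * sin r / r)"
  proof -
    define F where "F t = \<i> / complex_of_real r * exp (\<i> * complex_of_real (r * cos t))" for t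
    have "(g has_integral (F pi - F 0)) {0..pi}"
    proof (rule fundamental_theorem_of_calculus)
      fix t
      have "((\<lambda>t. r * cos t) has_real_derivative (- r * sin t)) (at t)"
        by (auto intro!: derivative_eq_intros)
      then have "(F has_vector_derivative (\<i> / complex_of_real r * (\<i> * complex_of_real (- r * sin t)
          * exp (\<i> * complex_of_real (r * cos t))))) (at t)"
        unfolding F_def by (intro has_vector_derivative_mult_right has_vector_derivative_exp_i)
      then show "(F has_vector_derivative g t) (at t within {0..pi})"
        unfolding g_def using r by (simp add: field_simps has_vector_derivative_at_within)
    qed simp
    moreover have "F pi - F 0 = complex_of_real (2 * sin r / r)"
    proof -
      have "F pi - F 0 = \<i> / complex_of_real r * (exp (- (\<i> * complex_of_real r)) - exp (\<i> * complex_of_real r))"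
        unfolding F_def by (simp add: algebra_simps)
      also have "exp (- (\<i> * complex_of_real r)) - exp (\<i> * complex_of_real r) = - 2 * \<i> * complex_of_real (sin r)"
        by (simp add: complex_eq_iff Re_exp Im_exp)
      finally show ?thesis using r by (simp add: field_simps)
    qed
    ultimately show ?thesis by (simp add: integral_unique)
  qed
  finally show ?thesis by simp
qed

lemma plane_wave_int_eq:
  "c \<noteq> 0 \<Longrightarrow> plane_wave_int c = complex_of_real (4 * pi * sin (norm c) / norm c)"
  unfolding plane_wave_int_eq_z_axis[of c] by (rule plane_wave_int_z_axis) simp

definition plane_wave_moment :: "3 \<Rightarrow> real^3 \<Rightarrow> complex" where
  "plane_wave_moment m c = unit_sphere_int (\<lambda>y. complex_of_real (y$m) * exp (\<i> * complex_of_real (inner c y)))"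

lemma has_vector_derivative_plane_wave_int_axis:
  "((\<lambda>s. plane_wave_int (c + s *\<^sub>R axis m 1)) has_vector_derivative \<i> * plane_wave_moment m c) (at 0)"
proof -
  have "((\<lambda>s. plane_wave_int (c + s *\<^sub>R axis m 1)) has_vector_derivative
      unit_sphere_int (\<lambda>y. \<i> * complex_of_real (inner (axis m 1) y) * exp (\<i> * complex_of_real (inner (c + 0 *\<^sub>R axis m 1) y)))) (at 0)"
    by (rule has_vector_derivative_plane_wave_int[where f'="\<lambda>_. axis m 1"]) (auto intro!: derivative_eq_intros)
  then show ?thesis
    unfolding plane_wave_moment_def
    by (simp add: inner_commute[of "axis m 1"] inner_axis mult.assoc unit_sphere_int_cmult)
qed

text \<open>Obtained by differentiating \<open>plane_wave_int_eq\<close> in the direction of the \<open>m\<close>-th axis.\<close>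

lemma plane_wave_moment_eq:
  assumes c: "c \<noteq> 0"
  shows "plane_wave_moment m c
    = - \<i> * complex_of_real (4 * pi * (norm c * cos (norm c) - sin (norm c)) / (norm c)^2 * (c$m / norm c))"
proof -
  define N where "N s = norm (c + s *\<^sub>R axis m 1)" for s
  define n where "n = norm c"
  define h' where "h' = 4 * pi * (n * cos n - sin n) / n^2 * (c$m / n)"
  define S where "S = {s. c + s *\<^sub>R axis m 1 \<noteq> 0}"
  have np: "n > 0" using c unfolding n_def by simp
  have dN: "(N has_real_derivative (c$m / n)) (at 0)"
    unfolding N_def n_def by (rule has_real_derivative_norm_axis[OF c])
  have N0: "N 0 = n" unfolding N_def n_def by simp
  have "((\<lambda>s. 4 * pi * sin (N s) / N s) has_real_derivative h') (at 0)"
    using np unfolding h'_def by (auto intro!: derivative_eq_intros dN simp: N0 field_simps power2_eq_square)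
  then have d: "((\<lambda>s. complex_of_real (4 * pi * sin (N s) / N s)) has_vector_derivative complex_of_real h') (at 0)"
    by (rule has_vector_derivative_of_real)
  have "open S" unfolding S_def by (rule open_Collect_neq) (auto intro!: continuous_intros)
  moreover have "0 \<in> S" unfolding S_def using c by simp
  moreover have "complex_of_real (4 * pi * sin (N s) / N s) = plane_wave_int (c + s *\<^sub>R axis m 1)" if "s \<in> S" for s
    using plane_wave_int_eq[of "c + s *\<^sub>R axis m 1"] that unfolding S_def N_def by simp
  ultimately have "((\<lambda>s. plane_wave_int (c + s *\<^sub>R axis m 1)) has_vector_derivative complex_of_real h') (at 0)"
    by (rule has_vector_derivative_transform_within_open[OF d])
  then have "\<i> * plane_wave_moment m c = complex_of_real h'"
    by (rule vector_derivative_unique_at[OF has_vector_derivative_plane_wave_int_axis])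
  then have "- \<i> * (\<i> * plane_wave_moment m c) = - \<i> * complex_of_real h'" by simp
  then show ?thesis unfolding h'_def n_def by (simp add: mult.assoc[symmetric])
qed

section \<open>The Helmholtz--Kirchhoff identities at infinity\<close>

lemma cnj_G0_pattern_mult:
  "cnj (G0_pattern k a y) * G0_pattern k b y
    = exp (\<i> * complex_of_real (inner (k *\<^sub>R (a - b)) y)) / complex_of_real (16 * pi^2)"
proof -
  have "exp (\<i> * complex_of_real (k * inner a y)) * exp (- \<i> * complex_of_real (k * inner b y))
      = exp (\<i> * complex_of_real (inner (k *\<^sub>R (a - b)) y))"
    by (simp add: inner_diff_left algebra_simps flip: exp_add)
  then show ?thesis
    unfolding G0_pattern_def by (simp add: exp_cnj power2_eq_square)
qed

lemma Im_G0: "Im (G0 c0 \<omega> a b) = sin (\<omega> / c0 * dist a b) / (4 * pi * dist a b)"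
  unfolding G0_def by (simp add: Im_divide_of_real Im_exp)

lemma unit_sphere_int_cnj_G0_pattern_mult:
  assumes k: "\<omega> / c0 > 0" and ab: "a \<noteq> b"
  shows "unit_sphere_int (\<lambda>y. cnj (G0_pattern (\<omega> / c0) a y) * G0_pattern (\<omega> / c0) b y)
    = complex_of_real (c0 / \<omega> * Im (G0 c0 \<omega> a b))"
proof -
  define k where "k = \<omega> / c0"
  define r where "r = dist a b"
  have rp: "r > 0" using ab unfolding r_def by simp
  have kp: "k > 0" using k unfolding k_def .
  have nc: "norm (k *\<^sub>R (a - b)) = k * r" using kp unfolding r_def by (simp add: dist_norm)
  have "unit_sphere_int (\<lambda>y. cnj (G0_pattern k a y) * G0_pattern k b y)
      = plane_wave_int (k *\<^sub>R (a - b)) / complex_of_real (16 * pi^2)"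
    unfolding cnj_G0_pattern_mult plane_wave_int_def
    using unit_sphere_int_cmult[of "1 / complex_of_real (16 * pi^2)"] by simp
  also have "\<dots> = complex_of_real (sin (k * r) / (4 * pi * k * r))"
  proof -
    have "plane_wave_int (k *\<^sub>R (a - b)) = complex_of_real (4 * pi * sin (k * r) / (k * r))"
      using plane_wave_int_eq[of "k *\<^sub>R (a - b)"] kp ab nc by simp
    then show ?thesis using kp rp by (simp add: field_simps power2_eq_square)
  qed
  also have "\<dots> = complex_of_real (c0 / \<omega> * Im (G0 c0 \<omega> a b))"
    unfolding Im_G0 k_def[symmetric] r_def[symmetric] using rp kp k_def by (simp add: field_simps)
  finally show ?thesis unfolding k_def .
qed

lemma unit_sphere_int_cnj_G0_pattern_mult_grad:
  assumes k: "\<omega> / c0 > 0" and aw: "a \<noteq> w"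
  shows "unit_sphere_int (\<lambda>y. cnj (G0_pattern (\<omega> / c0) a y) * grad_G0_pattern (\<omega> / c0) w m y)
    = complex_of_real (c0 / \<omega> * Im (grad (G0 c0 \<omega> a) w $ m))"
proof -
  define k where "k = \<omega> / c0"
  define r where "r = dist a w"
  define Y where "Y = k * r * cos (k * r) - sin (k * r)"
  define q where "q = (a - w)$m"
  have rp: "r > 0" using aw unfolding r_def by simp
  have kp: "k > 0" using k unfolding k_def .
  have nc: "norm (k *\<^sub>R (a - w)) = k * r" using kp unfolding r_def by (simp add: dist_norm)
  have pt: "cnj (G0_pattern k a y) * grad_G0_pattern k w m y = (- \<i> * complex_of_real k / complex_of_real (16 * pi^2)) *
     (complex_of_real (y$m) * exp (\<i> * complex_of_real (inner (k *\<^sub>R (a - w)) y)))" for y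
    unfolding grad_G0_pattern_def using cnj_G0_pattern_mult[of k a y w]
    by (simp add: field_simps)
  have "plane_wave_moment m (k *\<^sub>R (a - w)) = - \<i> * complex_of_real (4 * pi * Y / (k * r)^2 * (k * q / (k * r)))"
    unfolding Y_def q_def using plane_wave_moment_eq[of "k *\<^sub>R (a - w)" m] kp aw nc by simp
  then have "unit_sphere_int (\<lambda>y. cnj (G0_pattern k a y) * grad_G0_pattern k w m y)
      = complex_of_real (- k * (4 * pi * Y / (k * r)^2 * (k * q / (k * r))) / (16 * pi^2))"
    unfolding pt plane_wave_moment_def unit_sphere_int_cmult by (simp add: field_simps)
  also have "- k * (4 * pi * Y / (k * r)^2 * (k * q / (k * r))) / (16 * pi^2)
      = 1 / k * (Y / (4 * pi * r^2) * (- q / r))"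
    using kp rp by (simp add: field_simps power2_eq_square power3_eq_cube)
  also have "\<dots> = c0 / \<omega> * Im (grad (G0 c0 \<omega> a) w $ m)"
    unfolding grad_G0_nth[OF aw] Y_def q_def k_def r_def by (simp add: Im_dG0_radial)
  finally show ?thesis unfolding k_def .
qed

lemma G0_commute: "G0 c0 \<omega> a b = G0 c0 \<omega> b a"
  unfolding G0_def by (simp add: dist_commute)

lemma bil_scaleM: "bil u (scaleM t M) v = complex_of_real t * bil u M v"
  unfolding bil_def scaleM_def by (simp add: sum_distrib_left algebra_simps)

lemma ImM_scaleM: "ImM (scaleM t M) = scaleM t (ImM M)"
  unfolding ImM_def scaleM_def by (simp add: vec_eq_iff)

lemma bil_eq_column_sum: "bil u M v = (\<Sum>m\<in>UNIV. (\<Sum>i\<in>UNIV. u$i * M$i$m) * v$m)"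
  unfolding bil_def by (subst sum.swap) (simp add: sum_distrib_right)

lemma of_real_Im_eq: "complex_of_real (Im z) = (z - cnj z) / (2 * \<i>)"
  by (simp add: complex_eq_iff)

lemma of_real_Im_mult3:
  "complex_of_real (Im x) * y * w + cnj x * cnj y * complex_of_real (Im w)
    = complex_of_real (Im (x * y * w)) - cnj x * complex_of_real (Im y) * w"
  unfolding of_real_Im_eq by (simp add: field_simps)

lemma Im_bil_cross_terms:
  assumes "transpose M = M"
  shows "(\<Sum>m\<in>UNIV. (\<Sum>i\<in>UNIV. b$i * M$i$m) * complex_of_real (Im (a$m)))
      + (\<Sum>m\<in>UNIV. cnj (\<Sum>i\<in>UNIV. a$i * M$i$m) * complex_of_real (Im (b$m)))
    = complex_of_real (Im (bil a M b)) - bil (\<chi> m. cnj (a$m)) (ImM M) b"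
proof -
  have M: "M$m$i = M$i$m" for i m
    using assms unfolding transpose_def by (metis vec_lambda_beta)
  have "(\<Sum>m\<in>UNIV. (\<Sum>i\<in>UNIV. b$i * M$i$m) * complex_of_real (Im (a$m)))
      = (\<Sum>i\<in>UNIV. \<Sum>m\<in>UNIV. complex_of_real (Im (a$i)) * M$i$m * b$m)"
    unfolding sum_distrib_right by (intro sum.cong refl) (simp add: M ac_simps)
  moreover have "(\<Sum>m\<in>UNIV. cnj (\<Sum>i\<in>UNIV. a$i * M$i$m) * complex_of_real (Im (b$m)))
      = (\<Sum>i\<in>UNIV. \<Sum>m\<in>UNIV. cnj (a$i) * cnj (M$i$m) * complex_of_real (Im (b$m)))"
    by (subst sum.swap) (simp add: cnj_sum sum_distrib_right)
  ultimately show ?thesis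
    unfolding bil_def ImM_def
    by (simp add: sum.distrib[symmetric] of_real_Im_mult3 Im_sum sum_subtractf)
qed

text \<open>Far-field pattern of the field scattered by the inclusion at \<open>w\<close> when the source sits at \<open>x\<close>.\<close>

definition inclusion_pattern :: "real \<Rightarrow> real \<Rightarrow> complex \<Rightarrow> complex^3^3 \<Rightarrow> real^3 \<Rightarrow> real^3 \<Rightarrow> real^3 \<Rightarrow> complex" where
  "inclusion_pattern c0 \<omega> \<rho> M w x y = \<rho> * G0 c0 \<omega> x w * G0_pattern (\<omega> / c0) w y
     + (\<Sum>m\<in>UNIV. (\<Sum>i\<in>UNIV. grad (G0 c0 \<omega> x) w $ i * M$i$m) * grad_G0_pattern (\<omega> / c0) w m y)"

definition Gfull_pattern :: "real \<Rightarrow> real \<Rightarrow> nat \<Rightarrow> (nat \<Rightarrow> real^3) \<Rightarrow> complex \<Rightarrow> complex^3^3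
    \<Rightarrow> real \<Rightarrow> real^3 \<Rightarrow> real^3 \<Rightarrow> complex" where
  "Gfull_pattern c0 \<omega> J z \<rho> M t x y
     = G0_pattern (\<omega> / c0) x y + complex_of_real t * (\<Sum>j<J. inclusion_pattern c0 \<omega> \<rho> M (z j) x y)"

lemma continuous_on_inclusion_pattern [continuous_intros]:
  "continuous_on S (inclusion_pattern c0 \<omega> \<rho> M w x)"
  unfolding inclusion_pattern_def[abs_def] by (intro continuous_intros)

lemma Gfull_scaled_eq:
  "Gfull c0 \<omega> J z (complex_of_real t * \<rho>) (scaleM t M) x
    = (\<lambda>y. G0 c0 \<omega> x y + complex_of_real t * (\<Sum>j<J. \<rho> * G0 c0 \<omega> x (z j) * G0 c0 \<omega> (z j) y
        + (\<Sum>m\<in>UNIV. (\<Sum>i\<in>UNIV. grad (G0 c0 \<omega> x) (z j) $ i * M$i$m) * grad (G0 c0 \<omega> y) (z j) $ m)))"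
  unfolding Gfull_def[abs_def] bil_scaleM unfolding bil_eq_column_sum
  by (simp add: fun_eq_iff G0_commute[of c0 \<omega> _ "z _"] sum_distrib_left sum.distrib algebra_simps)

lemma has_far_field_Gfull:
  "has_far_field (\<omega> / c0) (Gfull c0 \<omega> J z (complex_of_real t * \<rho>) (scaleM t M) x) (Gfull_pattern c0 \<omega> J z \<rho> M t x)"
  unfolding Gfull_scaled_eq Gfull_pattern_def[abs_def] inclusion_pattern_def
  by (intro has_far_field_add has_far_field_cmult has_far_field_sum has_far_field_G0 has_far_field_grad_G0
      finite_lessThan finite)

lemma unit_sphere_int_cnj_G0_pattern_mult_inclusion:
  assumes k: "\<omega> / c0 > 0" and aw: "a \<noteq> w"
  shows "unit_sphere_int (\<lambda>y. cnj (G0_pattern (\<omega> / c0) a y) * inclusion_pattern c0 \<omega> \<rho> M w x y)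
    = complex_of_real (c0 / \<omega>) * (\<rho> * G0 c0 \<omega> x w * complex_of_real (Im (G0 c0 \<omega> a w))
        + (\<Sum>m\<in>UNIV. (\<Sum>i\<in>UNIV. grad (G0 c0 \<omega> x) w $ i * M$i$m) * complex_of_real (Im (grad (G0 c0 \<omega> a) w $ m))))"
proof -
  define k where "k = \<omega> / c0"
  define \<beta> where "\<beta> m = (\<Sum>i\<in>UNIV. grad (G0 c0 \<omega> x) w $ i * M$i$m)" for m
  have "unit_sphere_int (\<lambda>y. cnj (G0_pattern k a y) * inclusion_pattern c0 \<omega> \<rho> M w x y)
      = unit_sphere_int (\<lambda>y. \<rho> * G0 c0 \<omega> x w * (cnj (G0_pattern k a y) * G0_pattern k w y)
          + (\<Sum>m\<in>UNIV. \<beta> m * (cnj (G0_pattern k a y) * grad_G0_pattern k w m y)))"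
    unfolding inclusion_pattern_def \<beta>_def k_def by (simp add: sum_distrib_left algebra_simps)
  also have "\<dots> = \<rho> * G0 c0 \<omega> x w * unit_sphere_int (\<lambda>y. cnj (G0_pattern k a y) * G0_pattern k w y)
      + (\<Sum>m\<in>UNIV. \<beta> m * unit_sphere_int (\<lambda>y. cnj (G0_pattern k a y) * grad_G0_pattern k w m y))"
    by (simp add: unit_sphere_int_add unit_sphere_int_sum unit_sphere_int_cmult continuous_intros)
  also have "\<dots> = complex_of_real (c0 / \<omega>) * (\<rho> * G0 c0 \<omega> x w * complex_of_real (Im (G0 c0 \<omega> a w))
        + (\<Sum>m\<in>UNIV. \<beta> m * complex_of_real (Im (grad (G0 c0 \<omega> a) w $ m))))"
    unfolding k_def unit_sphere_int_cnj_G0_pattern_mult[OF k aw] unit_sphere_int_cnj_G0_pattern_mult_grad[OF k aw]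
    by (simp add: sum_distrib_left algebra_simps)
  finally show ?thesis unfolding k_def \<beta>_def .
qed

lemma unit_sphere_int_cnj_inclusion_mult_G0_pattern:
  assumes k: "\<omega> / c0 > 0" and wb: "w \<noteq> b"
  shows "unit_sphere_int (\<lambda>y. cnj (inclusion_pattern c0 \<omega> \<rho> M w x y) * G0_pattern (\<omega> / c0) b y)
    = complex_of_real (c0 / \<omega>) * (cnj (\<rho> * G0 c0 \<omega> x w) * complex_of_real (Im (G0 c0 \<omega> b w))
        + (\<Sum>m\<in>UNIV. cnj (\<Sum>i\<in>UNIV. grad (G0 c0 \<omega> x) w $ i * M$i$m) * complex_of_real (Im (grad (G0 c0 \<omega> b) w $ m))))"
proof -
  have eq: "(\<lambda>y. cnj (inclusion_pattern c0 \<omega> \<rho> M w x y) * G0_pattern (\<omega> / c0) b y)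
      = (\<lambda>y. cnj (cnj (G0_pattern (\<omega> / c0) b y) * inclusion_pattern c0 \<omega> \<rho> M w x y))"
    by (simp add: ac_simps)
  have "unit_sphere_int (\<lambda>y. cnj (inclusion_pattern c0 \<omega> \<rho> M w x y) * G0_pattern (\<omega> / c0) b y)
      = cnj (unit_sphere_int (\<lambda>y. cnj (G0_pattern (\<omega> / c0) b y) * inclusion_pattern c0 \<omega> \<rho> M w x y))"
    unfolding eq by (rule unit_sphere_int_cnj) (intro continuous_intros)
  then show ?thesis
    unfolding unit_sphere_int_cnj_G0_pattern_mult_inclusion[OF k wb[symmetric]]
    by (simp add: cnj_sum)
qed

lemma unit_sphere_int_inclusion_cross_terms:
  assumes k: "\<omega> / c0 > 0" and "w \<noteq> xr" "w \<noteq> xr'" and sym: "transpose M = M"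
  shows "unit_sphere_int (\<lambda>y. cnj (G0_pattern (\<omega> / c0) xr y) * inclusion_pattern c0 \<omega> \<rho> M w xr' y)
      + unit_sphere_int (\<lambda>y. cnj (inclusion_pattern c0 \<omega> \<rho> M w xr y) * G0_pattern (\<omega> / c0) xr' y)
    = complex_of_real (c0 / \<omega>) * (complex_of_real (Im (\<rho> * G0 c0 \<omega> xr w * G0 c0 \<omega> xr' w))
        - complex_of_real (Im \<rho>) * cnj (G0 c0 \<omega> xr w) * G0 c0 \<omega> xr' w
        + complex_of_real (Im (bil (grad (G0 c0 \<omega> xr) w) M (grad (G0 c0 \<omega> xr') w)))
        - bil (grad (\<lambda>v. cnj (G0 c0 \<omega> xr v)) w) (ImM M) (grad (G0 c0 \<omega> xr') w))"
proof -
  define Ga where "Ga = G0 c0 \<omega> xr w"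
  define Gb where "Gb = G0 c0 \<omega> xr' w"
  define a where "a = grad (G0 c0 \<omega> xr) w"
  define b where "b = grad (G0 c0 \<omega> xr') w"
  have "unit_sphere_int (\<lambda>y. cnj (G0_pattern (\<omega> / c0) xr y) * inclusion_pattern c0 \<omega> \<rho> M w xr' y)
      + unit_sphere_int (\<lambda>y. cnj (inclusion_pattern c0 \<omega> \<rho> M w xr y) * G0_pattern (\<omega> / c0) xr' y)
    = complex_of_real (c0 / \<omega>) * ((\<rho> * Gb * complex_of_real (Im Ga) + cnj (\<rho> * Ga) * complex_of_real (Im Gb))
        + ((\<Sum>m\<in>UNIV. (\<Sum>i\<in>UNIV. b$i * M$i$m) * complex_of_real (Im (a$m)))
          + (\<Sum>m\<in>UNIV. cnj (\<Sum>i\<in>UNIV. a$i * M$i$m) * complex_of_real (Im (b$m)))))"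
    unfolding unit_sphere_int_cnj_G0_pattern_mult_inclusion[OF k assms(2)[symmetric]]
      unit_sphere_int_cnj_inclusion_mult_G0_pattern[OF k assms(3)] Ga_def Gb_def a_def b_def
    by (simp only: algebra_simps)
  also have "\<rho> * Gb * complex_of_real (Im Ga) + cnj (\<rho> * Ga) * complex_of_real (Im Gb)
      = complex_of_real (Im (\<rho> * Ga * Gb)) - complex_of_real (Im \<rho>) * cnj Ga * Gb"
    unfolding of_real_Im_eq by (simp add: field_simps)
  also have "grad (\<lambda>v. cnj (G0 c0 \<omega> xr v)) w = (\<chi> m. cnj (a$m))"
    unfolding a_def using assms(2) by (simp add: grad_cnj_G0)
  ultimately show ?thesis
    unfolding Im_bil_cross_terms[OF sym] Ga_def[symmetric] Gb_def[symmetric] a_def[symmetric] b_def[symmetric]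
    by (simp only: algebra_simps)
qed

lemma unit_sphere_int_Gfull_pattern_expand:
  fixes c0 \<omega> :: real
  defines "k \<equiv> \<omega> / c0"
  shows "unit_sphere_int (\<lambda>y. cnj (Gfull_pattern c0 \<omega> J z \<rho> M t xr y) * Gfull_pattern c0 \<omega> J z \<rho> M t xr' y)
   = unit_sphere_int (\<lambda>y. cnj (G0_pattern k xr y) * G0_pattern k xr' y)
     + complex_of_real t * (\<Sum>j<J. unit_sphere_int (\<lambda>y. cnj (G0_pattern k xr y) * inclusion_pattern c0 \<omega> \<rho> M (z j) xr' y)
         + unit_sphere_int (\<lambda>y. cnj (inclusion_pattern c0 \<omega> \<rho> M (z j) xr y) * G0_pattern k xr' y))
     + complex_of_real t ^ 2 * unit_sphere_int (\<lambda>y. cnj (\<Sum>j<J. inclusion_pattern c0 \<omega> \<rho> M (z j) xr y)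
         * (\<Sum>j<J. inclusion_pattern c0 \<omega> \<rho> M (z j) xr' y))"
proof -
  define P where "P x y = (\<Sum>j<J. inclusion_pattern c0 \<omega> \<rho> M (z j) x y)" for x y
  define F where "F y = cnj (G0_pattern k xr y) * G0_pattern k xr' y" for y
  define G where "G j y = cnj (G0_pattern k xr y) * inclusion_pattern c0 \<omega> \<rho> M (z j) xr' y
      + cnj (inclusion_pattern c0 \<omega> \<rho> M (z j) xr y) * G0_pattern k xr' y" for j y
  define H where "H y = cnj (P xr y) * P xr' y" for y
  have "cnj (Gfull_pattern c0 \<omega> J z \<rho> M t xr y) * Gfull_pattern c0 \<omega> J z \<rho> M t xr' y
      = F y + (complex_of_real t * (\<Sum>j<J. G j y) + complex_of_real t ^ 2 * H y)" for y
    unfolding Gfull_pattern_def F_def G_def H_def P_def k_def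
    by (simp add: cnj_sum sum_distrib_left sum_distrib_right sum.distrib algebra_simps power2_eq_square)
  then have "unit_sphere_int (\<lambda>y. cnj (Gfull_pattern c0 \<omega> J z \<rho> M t xr y) * Gfull_pattern c0 \<omega> J z \<rho> M t xr' y)
      = unit_sphere_int F + (complex_of_real t * (\<Sum>j<J. unit_sphere_int (G j)) + complex_of_real t ^ 2 * unit_sphere_int H)"
    unfolding F_def G_def H_def P_def
    by (simp add: unit_sphere_int_add unit_sphere_int_cmult unit_sphere_int_sum continuous_intros)
  moreover have "unit_sphere_int (G j) = unit_sphere_int (\<lambda>y. cnj (G0_pattern k xr y) * inclusion_pattern c0 \<omega> \<rho> M (z j) xr' y)
      + unit_sphere_int (\<lambda>y. cnj (inclusion_pattern c0 \<omega> \<rho> M (z j) xr y) * G0_pattern k xr' y)" for j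
    unfolding G_def k_def by (simp add: unit_sphere_int_add continuous_intros)
  ultimately show ?thesis unfolding F_def H_def P_def by (simp add: add.assoc)
qed

lemma Qexp_scaled:
  "Qexp c0 \<omega> J z (complex_of_real t * \<rho>) (scaleM t M) xr xr'
   = complex_of_real (c0 / \<omega>) * complex_of_real (Im (G0 c0 \<omega> xr xr'))
     + complex_of_real t * (Qexp c0 \<omega> J z \<rho> M xr xr' - complex_of_real (c0 / \<omega>) * complex_of_real (Im (G0 c0 \<omega> xr xr')))"
  unfolding Qexp_def bil_scaleM ImM_scaleM
  by (simp add: mult.assoc sum_distrib_left algebra_simps)

lemma sum_inclusion_cross_terms_eq_Qexp:
  assumes k: "\<omega> / c0 > 0" and "transpose M = M" and "\<forall>j<J. z j \<noteq> xr \<and> z j \<noteq> xr'"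
  shows "(\<Sum>j<J. unit_sphere_int (\<lambda>y. cnj (G0_pattern (\<omega> / c0) xr y) * inclusion_pattern c0 \<omega> \<rho> M (z j) xr' y)
      + unit_sphere_int (\<lambda>y. cnj (inclusion_pattern c0 \<omega> \<rho> M (z j) xr y) * G0_pattern (\<omega> / c0) xr' y))
    = Qexp c0 \<omega> J z \<rho> M xr xr' - complex_of_real (c0 / \<omega>) * complex_of_real (Im (G0 c0 \<omega> xr xr'))"
proof -
  have "(\<Sum>j<J. unit_sphere_int (\<lambda>y. cnj (G0_pattern (\<omega> / c0) xr y) * inclusion_pattern c0 \<omega> \<rho> M (z j) xr' y)
      + unit_sphere_int (\<lambda>y. cnj (inclusion_pattern c0 \<omega> \<rho> M (z j) xr y) * G0_pattern (\<omega> / c0) xr' y))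
    = (\<Sum>j<J. complex_of_real (c0 / \<omega>) * (complex_of_real (Im (\<rho> * G0 c0 \<omega> xr (z j) * G0 c0 \<omega> xr' (z j)))
        - complex_of_real (Im \<rho>) * cnj (G0 c0 \<omega> xr (z j)) * G0 c0 \<omega> xr' (z j)
        + complex_of_real (Im (bil (grad (G0 c0 \<omega> xr) (z j)) M (grad (G0 c0 \<omega> xr') (z j))))
        - bil (grad (\<lambda>v. cnj (G0 c0 \<omega> xr v)) (z j)) (ImM M) (grad (G0 c0 \<omega> xr') (z j))))"
    using assms(3) by (intro sum.cong refl unit_sphere_int_inclusion_cross_terms[OF k _ _ assms(2)]) auto
  also have "\<dots> = Qexp c0 \<omega> J z \<rho> M xr xr' - complex_of_real (c0 / \<omega>) * complex_of_real (Im (G0 c0 \<omega> xr xr'))"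
    unfolding Qexp_def by (simp add: sum_distrib_left sum_subtractf sum.distrib algebra_simps)
  finally show ?thesis .
qed

lemma unit_sphere_int_Gfull_pattern_eq:
  assumes k: "\<omega> / c0 > 0" and "transpose M = M" and "xr \<noteq> xr'" and "\<forall>j<J. z j \<noteq> xr \<and> z j \<noteq> xr'"
  shows "unit_sphere_int (\<lambda>y. cnj (Gfull_pattern c0 \<omega> J z \<rho> M t xr y) * Gfull_pattern c0 \<omega> J z \<rho> M t xr' y)
    = Qexp c0 \<omega> J z (complex_of_real t * \<rho>) (scaleM t M) xr xr'
      + complex_of_real (t^2) * unit_sphere_int (\<lambda>y. cnj (\<Sum>j<J. inclusion_pattern c0 \<omega> \<rho> M (z j) xr y)
          * (\<Sum>j<J. inclusion_pattern c0 \<omega> \<rho> M (z j) xr' y))"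
  unfolding unit_sphere_int_Gfull_pattern_expand Qexp_scaled unit_sphere_int_cnj_G0_pattern_mult[OF k assms(3)]
    sum_inclusion_cross_terms_eq_Qexp[OF k assms(2,4)]
  by (simp add: algebra_simps)

theorem proposition3p1:
  fixes c0 \<omega> :: real and J :: nat and z :: "nat \<Rightarrow> real^3" and \<rho> :: complex
    and M :: "complex^3^3" and xr xr' :: "real^3"
  assumes "c0 > 0" and "\<omega> > 0"
    and "transpose M = M"
    and "xr \<noteq> xr'"
    and "\<forall>j<J. z j \<noteq> xr \<and> z j \<noteq> xr'"
  shows "\<exists>Q :: real \<Rightarrow> complex.
           (\<forall>t. ((\<lambda>L. QL c0 \<omega> J z (complex_of_real t * \<rho>) (scaleM t M) L xr xr')
                    \<longlongrightarrow> Q t) at_top)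
         \<and> (\<lambda>t. Q t - Qexp c0 \<omega> J z (complex_of_real t * \<rho>) (scaleM t M) xr xr')
             \<in> O[at 0](\<lambda>t. complex_of_real (t^2))"
proof -
  have k: "\<omega> / c0 > 0" using assms(1,2) by simp
  define Q where "Q t = unit_sphere_int (\<lambda>y. cnj (Gfull_pattern c0 \<omega> J z \<rho> M t xr y) * Gfull_pattern c0 \<omega> J z \<rho> M t xr' y)" for t
  define C where "C = unit_sphere_int (\<lambda>y. cnj (\<Sum>j<J. inclusion_pattern c0 \<omega> \<rho> M (z j) xr y)
      * (\<Sum>j<J. inclusion_pattern c0 \<omega> \<rho> M (z j) xr' y))"
  have "((\<lambda>L. QL c0 \<omega> J z (complex_of_real t * \<rho>) (scaleM t M) L xr xr') \<longlongrightarrow> Q t) at_top" for t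
    unfolding QL_def Q_def by (rule tendsto_sphere_int_cnj_mult[OF has_far_field_Gfull has_far_field_Gfull])
  moreover have "Q t - Qexp c0 \<omega> J z (complex_of_real t * \<rho>) (scaleM t M) xr xr' = complex_of_real (t^2) * C" for t
    unfolding Q_def C_def unit_sphere_int_Gfull_pattern_eq[OF k assms(3-5)] by simp
  then have "(\<lambda>t. Q t - Qexp c0 \<omega> J z (complex_of_real t * \<rho>) (scaleM t M) xr xr') \<in> O[at 0](\<lambda>t. complex_of_real (t^2))"
    by (intro bigoI[where c="norm C"]) (simp add: norm_mult)
  ultimately show ?thesis by blast
qed

end
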